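(* Let $P$ be a reversible operad based on sets with mated species $Q$. On the graph complex, $\partial_E^2=0$.
   Context: All vector spaces over $\mathbb{Q}$. Operad based on sets: sets $P[I]$ of operations with inputs labelled by $I$ and one output; substitution $p_2\xrightarrow{y}p_1$ (output of $p_2$ into input $y$ of $p_1$), associative, relabelling-compatible, unit $u\in P[1]$; $P[I,\{z\}]$: output labelled $z$. Reversible: $r_{x,y}:P[I,\{y\}]\to P[(I\setminus\{x\})\cup\{y\},\{x\}]$ with $r_{y,x}r_{x,y}=\mathrm{id}$, $r_{x,y}r_{y,z}=r_{x,z}$, $r_{x,z}(p_2\xrightarrow{y}p_1)=p_2\xrightarrow{y}r_{x,z}(p_1)$ if $x$ is an input of $p_1$, $=r_{y,z}(p_1)\xrightarrow{y}r_{x,y}(p_2)$ if $x$ is an input of $p_2$. Mated species: $Q[K]$ is the quotient of $\bigsqcup_{I\sqcup J=K}P[I]\times P[J]$ (outputs given a common label) by $p\otimes p'=p'\otimes p$ and $(p_3\xrightarrow{y}p_2)\otimes p_1=p_3\otimes(p_1\xrightarrow{w}r_{y,w}(p_2))$; classes are matings. $\partial q/\partial a$ is the unique element of $P[K\setminus\{a\}]$ with $q=\frac{\partial q}{\partial a}\otimes u$. A $Q$-graph is a finite 1-dimensional CW complex with an element of $Q[H(v)]$ at each vertex $v$ ($H(v)$ its half-edges). Orientation: vertex ordering plus edge directions, an odd permutation or a single edge reversal negating it. $\mathcal G_k$: $\mathbb{Q}$-span of isomorphism classes of oriented $Q$-graphs with $k$ vertices modulo $(\Gamma,\sigma)=-(\Gamma,-\sigma)$.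 $\partial_E:\mathcal G_k\to\mathcal G_{k-1}$, $\partial_E(\Gamma,\sigma)=\sum_e(\Gamma/e,\sigma/e)$ over non-loop edges $e=\{h_1,h_2\}$ ($h_i$ at $v_i$ with structure $q_i$): contract $e$, new vertex structure $\frac{\partial q_1}{\partial h_1}\otimes\frac{\partial q_2}{\partial h_2}$; $\sigma/e$: representative with $e$ from vertex 1 to vertex 2, new vertex labelled 1, other labels lowered by 1, other directions kept. *)

theory Defs
  imports Complex_Main "HOL-Combinatorics.Permutations"
begin

text \<open>Labels of inputs (and half-edges) live in a type 'l; operations in a type 'o.
  op_set is the set of all operations (the disjoint union of the sets P[I]),
  op_inp p is the finite input set I of p (so P[I] = {p in op_set. op_inp p = I}),
  op_sub p2 y p1 is the substitution p2 -y-> p1 (output of p2 into input y of p1),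
  op_relab f p is the relabelling P[f] along a bijection f : op_inp p -> f ` op_inp p,
  op_unit x is the unit u relabelled to have input x (u in P[{x}]),
  op_rev x y p is r_{x,y}(p) for p in P[I,{y}] (output labelled y), x in I.\<close>

record ('l, 'o) opd =
  op_set :: "'o set"
  op_inp :: "'o \<Rightarrow> 'l set"
  op_sub :: "'o \<Rightarrow> 'l \<Rightarrow> 'o \<Rightarrow> 'o"
  op_relab :: "('l \<Rightarrow> 'l) \<Rightarrow> 'o \<Rightarrow> 'o"
  op_unit :: "'l \<Rightarrow> 'o"
  op_rev :: "'l \<Rightarrow> 'l \<Rightarrow> 'o \<Rightarrow> 'o"

definition operad_on_sets :: "('l, 'o) opd \<Rightarrow> bool" where
  "operad_on_sets P \<longleftrightarrow>
     (\<forall>p \<in> op_set P. finite (op_inp P p))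
   \<and> (\<forall>p1 \<in> op_set P. \<forall>p2 \<in> op_set P. \<forall>y.
        y \<in> op_inp P p1 \<and> op_inp P p1 \<inter> op_inp P p2 = {} \<longrightarrow>
          op_sub P p2 y p1 \<in> op_set P
        \<and> op_inp P (op_sub P p2 y p1) = (op_inp P p1 - {y}) \<union> op_inp P p2)
   \<comment> \<open>associativity, sequential form\<close>
   \<and> (\<forall>p1 \<in> op_set P. \<forall>p2 \<in> op_set P. \<forall>p3 \<in> op_set P. \<forall>y z.
        y \<in> op_inp P p1 \<and> z \<in> op_inp P p2
        \<and> op_inp P p1 \<inter> op_inp P p2 = {} \<and> op_inp P p1 \<inter> op_inp P p3 = {}
        \<and> op_inp P p2 \<inter> op_inp P p3 = {} \<longrightarrow>
          op_sub P p3 z (op_sub P p2 y p1) = op_sub P (op_sub P p3 z p2) y p1)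
   \<comment> \<open>associativity, parallel form\<close>
   \<and> (\<forall>p1 \<in> op_set P. \<forall>p2 \<in> op_set P. \<forall>p3 \<in> op_set P. \<forall>y z.
        y \<in> op_inp P p1 \<and> z \<in> op_inp P p1 \<and> y \<noteq> z
        \<and> op_inp P p1 \<inter> op_inp P p2 = {} \<and> op_inp P p1 \<inter> op_inp P p3 = {}
        \<and> op_inp P p2 \<inter> op_inp P p3 = {} \<longrightarrow>
          op_sub P p3 z (op_sub P p2 y p1) = op_sub P p2 y (op_sub P p3 z p1))
   \<comment> \<open>species structure: relabelling along bijections\<close>
   \<and> (\<forall>p \<in> op_set P. \<forall>f. inj_on f (op_inp P p) \<longrightarrow>
        op_relab P f p \<in> op_set P \<and> op_inp P (op_relab P f p) = f ` op_inp P p)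
   \<and> (\<forall>p \<in> op_set P. \<forall>f. (\<forall>x \<in> op_inp P p. f x = x) \<longrightarrow> op_relab P f p = p)
   \<and> (\<forall>p \<in> op_set P. \<forall>f g. (\<forall>x \<in> op_inp P p. f x = g x) \<longrightarrow> op_relab P f p = op_relab P g p)
   \<and> (\<forall>p \<in> op_set P. \<forall>f g. inj_on f (op_inp P p) \<and> inj_on g (f ` op_inp P p) \<longrightarrow>
        op_relab P g (op_relab P f p) = op_relab P (g \<circ> f) p)
   \<comment> \<open>substitution is compatible with relabelling\<close>
   \<and> (\<forall>p1 \<in> op_set P. \<forall>p2 \<in> op_set P. \<forall>y f.
        y \<in> op_inp P p1 \<and> op_inp P p1 \<inter> op_inp P p2 = {}
        \<and> inj_on f (op_inp P p1 \<union> op_inp P p2) \<longrightarrow>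
          op_relab P f (op_sub P p2 y p1) = op_sub P (op_relab P f p2) (f y) (op_relab P f p1))
   \<comment> \<open>unit\<close>
   \<and> (\<forall>x. op_unit P x \<in> op_set P \<and> op_inp P (op_unit P x) = {x})
   \<and> (\<forall>x f. op_relab P f (op_unit P x) = op_unit P (f x))
   \<and> (\<forall>p \<in> op_set P. \<forall>y. y \<in> op_inp P p \<longrightarrow> op_sub P (op_unit P y) y p = p)
   \<and> (\<forall>p \<in> op_set P. \<forall>y. y \<notin> op_inp P p \<longrightarrow> op_sub P p y (op_unit P y) = p)"

definition reversible :: "('l, 'o) opd \<Rightarrow> bool" where
  "reversible P \<longleftrightarrow>
     (\<forall>p \<in> op_set P. \<forall>x y. x \<in> op_inp P p \<and> y \<notin> op_inp P p \<longrightarrow>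
        op_rev P x y p \<in> op_set P \<and> op_inp P (op_rev P x y p) = (op_inp P p - {x}) \<union> {y})
   \<and> (\<forall>p \<in> op_set P. \<forall>x y. x \<in> op_inp P p \<and> y \<notin> op_inp P p \<longrightarrow>
        op_rev P y x (op_rev P x y p) = p)
   \<and> (\<forall>p \<in> op_set P. \<forall>x y z. x \<in> op_inp P p \<and> y \<in> op_inp P p \<and> x \<noteq> y \<and> z \<notin> op_inp P p \<longrightarrow>
        op_rev P x y (op_rev P y z p) = op_rev P x z p)
   \<and> (\<forall>p1 \<in> op_set P. \<forall>p2 \<in> op_set P. \<forall>x y z.
        y \<in> op_inp P p1 \<and> op_inp P p1 \<inter> op_inp P p2 = {}
        \<and> z \<notin> op_inp P p1 \<and> z \<notin> op_inp P p2 \<and> x \<in> op_inp P p1 \<and> x \<noteq> y \<longrightarrow>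
          op_rev P x z (op_sub P p2 y p1) = op_sub P p2 y (op_rev P x z p1))
   \<and> (\<forall>p1 \<in> op_set P. \<forall>p2 \<in> op_set P. \<forall>x y z.
        y \<in> op_inp P p1 \<and> op_inp P p1 \<inter> op_inp P p2 = {}
        \<and> z \<notin> op_inp P p1 \<and> z \<notin> op_inp P p2 \<and> x \<in> op_inp P p2 \<longrightarrow>
          op_rev P x z (op_sub P p2 y p1) = op_sub P (op_rev P y z p1) y (op_rev P x y p2))
   \<comment> \<open>naturality of r with respect to relabelling (r is a map of species)\<close>
   \<and> (\<forall>p \<in> op_set P. \<forall>x z f. x \<in> op_inp P p \<and> z \<notin> op_inp P p \<and> inj_on f (insert z (op_inp P p)) \<longrightarrow>
        op_relab P f (op_rev P x z p) = op_rev P (f x) (f z) (op_relab P f p))"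

text \<open>A representative of a mating is a pair (p, p'), meaning p \<otimes> p'.\<close>

definition mating_labels :: "('l, 'o) opd \<Rightarrow> 'o \<times> 'o \<Rightarrow> 'l set" where
  "mating_labels P q = op_inp P (fst q) \<union> op_inp P (snd q)"

definition mating_wf :: "('l, 'o) opd \<Rightarrow> 'l set \<Rightarrow> 'o \<times> 'o \<Rightarrow> bool" where
  "mating_wf P K q \<longleftrightarrow> fst q \<in> op_set P \<and> snd q \<in> op_set P
     \<and> op_inp P (fst q) \<inter> op_inp P (snd q) = {} \<and> mating_labels P q = K"

inductive mate_step :: "('l, 'o) opd \<Rightarrow> 'o \<times> 'o \<Rightarrow> 'o \<times> 'o \<Rightarrow> bool" for P where
  swap: "p \<in> op_set P \<Longrightarrow> p' \<in> op_set P \<Longrightarrow> op_inp P p \<inter> op_inp P p' = {} \<Longrightarrow>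
         mate_step P (p, p') (p', p)"
| move: "p1 \<in> op_set P \<Longrightarrow> p2 \<in> op_set P \<Longrightarrow> p3 \<in> op_set P \<Longrightarrow> y \<in> op_inp P p2 \<Longrightarrow>
         op_inp P p1 \<inter> op_inp P p2 = {} \<Longrightarrow> op_inp P p1 \<inter> op_inp P p3 = {} \<Longrightarrow>
         op_inp P p2 \<inter> op_inp P p3 = {} \<Longrightarrow>
         w \<notin> op_inp P p1 \<Longrightarrow> w \<notin> op_inp P p2 \<Longrightarrow> w \<notin> op_inp P p3 \<Longrightarrow>
         mate_step P (op_sub P p3 y p2, p1) (p3, op_sub P p1 w (op_rev P y w p2))"

definition mate_eq :: "('l, 'o) opd \<Rightarrow> 'o \<times> 'o \<Rightarrow> 'o \<times> 'o \<Rightarrow> bool" where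
  "mate_eq P = equivclp (mate_step P)"

definition mate_relab :: "('l, 'o) opd \<Rightarrow> ('l \<Rightarrow> 'l) \<Rightarrow> 'o \<times> 'o \<Rightarrow> 'o \<times> 'o" where
  "mate_relab P f q = (op_relab P f (fst q), op_relab P f (snd q))"

definition mate_deriv :: "('l, 'o) opd \<Rightarrow> 'o \<times> 'o \<Rightarrow> 'l \<Rightarrow> 'o" where
  "mate_deriv P q a = (THE p. p \<in> op_set P \<and> op_inp P p = mating_labels P q - {a}
                              \<and> mate_eq P q (p, op_unit P a))"

text \<open>A finite graph given by vertices, half-edges (labels), the attaching map of
  half-edges to vertices and the fixed-point-free involution pairing half-edges
  into edges; each vertex v carries a representative of a mating in Q[H(v)].\<close>

record ('v, 'l, 'o) qgraph =
  gV :: "'v set"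
  gH :: "'l set"
  gvert :: "'l \<Rightarrow> 'v"
  gopp :: "'l \<Rightarrow> 'l"
  gstr :: "'v \<Rightarrow> 'o \<times> 'o"

definition hedges_at :: "('v, 'l, 'o) qgraph \<Rightarrow> 'v \<Rightarrow> 'l set" where
  "hedges_at G v = {h \<in> gH G. gvert G h = v}"

definition is_qgraph :: "('l, 'o) opd \<Rightarrow> ('v, 'l, 'o) qgraph \<Rightarrow> bool" where
  "is_qgraph P G \<longleftrightarrow> finite (gV G) \<and> finite (gH G)
    \<and> (\<forall>h \<in> gH G. gvert G h \<in> gV G \<and> gopp G h \<in> gH G \<and> gopp G h \<noteq> h \<and> gopp G (gopp G h) = h)
    \<and> (\<forall>v \<in> gV G. mating_wf P (hedges_at G v) (gstr G v))"

text \<open>An oriented Q-graph representative: a graph, a vertex ordering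
  (bijection onto 1..k) and edge directions (the set of source half-edges,
  exactly one half-edge of each edge).\<close>

type_synonym ('v, 'l, 'o) ograph = "('v, 'l, 'o) qgraph \<times> ('v \<Rightarrow> nat) \<times> 'l set"

definition is_ograph :: "('l, 'o) opd \<Rightarrow> ('v, 'l, 'o) ograph \<Rightarrow> bool" where
  "is_ograph P g \<longleftrightarrow> (case g of (G, ord, src) \<Rightarrow>
      is_qgraph P G \<and> bij_betw ord (gV G) {1..card (gV G)} \<and> src \<subseteq> gH G
    \<and> (\<forall>h \<in> gH G. h \<in> src \<longleftrightarrow> gopp G h \<notin> src))"

definition perm_sign :: "nat \<Rightarrow> (nat \<Rightarrow> nat) \<Rightarrow> int" where
  "perm_sign k \<pi> = sign (\<lambda>i. if i \<in> {1..k} then \<pi> i else i)"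

text \<open>Isomorphism of Q-graphs (phiV on vertices, phiH on half-edges, carrying
  vertex structures to equivalent matings) together with the sign eps relating
  the two orientation representatives: sign of the induced permutation of the
  vertex orderings times (-1)^(number of reversed edges).\<close>

definition oiso :: "('l, 'o) opd \<Rightarrow> ('v, 'l, 'o) ograph \<Rightarrow> ('v, 'l, 'o) ograph
                    \<Rightarrow> ('v \<Rightarrow> 'v) \<Rightarrow> ('l \<Rightarrow> 'l) \<Rightarrow> int \<Rightarrow> bool" where
  "oiso P g g' phiV phiH eps \<longleftrightarrow> (case g of (G, ord, src) \<Rightarrow> case g' of (G', ord', src') \<Rightarrow>
      bij_betw phiV (gV G) (gV G') \<and> bij_betw phiH (gH G) (gH G')
    \<and> (\<forall>h \<in> gH G. gvert G' (phiH h) = phiV (gvert G h) \<and> gopp G' (phiH h) = phiH (gopp G h))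
    \<and> (\<forall>v \<in> gV G. mate_eq P (mate_relab P phiH (gstr G v)) (gstr G' (phiV v)))
    \<and> eps = perm_sign (card (gV G)) (\<lambda>i. ord' (phiV (inv_into (gV G) ord i)))
            * (-1) ^ card {h \<in> src. phiH h \<notin> src'})"

text \<open>Formal Q-linear combinations of oriented-graph representatives are
  finitely supported functions; the graph complex (all G_k at once) is their
  quotient by the span of the relations g = eps * g' for isomorphic
  representatives (this encodes both passing to isomorphism classes and
  (Gamma, sigma) = -(Gamma, -sigma)).\<close>

definition ind :: "'a \<Rightarrow> 'a \<Rightarrow> rat" where
  "ind g = (\<lambda>h. if h = g then 1 else 0)"

inductive_set relspan :: "('l, 'o) opd \<Rightarrow> (('v, 'l, 'o) ograph \<Rightarrow> rat) set" for P where
  zero: "(\<lambda>_. 0) \<in> relspan P"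
| add: "x \<in> relspan P \<Longrightarrow> y \<in> relspan P \<Longrightarrow> (\<lambda>g. x g + y g) \<in> relspan P"
| smult: "x \<in> relspan P \<Longrightarrow> (\<lambda>g. c * x g) \<in> relspan P"
| gen: "is_ograph P g \<Longrightarrow> is_ograph P g' \<Longrightarrow> oiso P g g' phiV phiH eps \<Longrightarrow>
        (\<lambda>h. ind g h - of_int eps * ind g' h) \<in> relspan P"

text \<open>Contraction of the non-loop edge {h, opp h}, where h is its source
  half-edge (at vertex v1) and opp h its target (at vertex v2).  The standard
  representative has v1 labelled 1, v2 labelled 2, the remaining vertices in
  their previous relative order, directions unchanged; cord_std is that
  ordering and contract_sign is the sign of passing to it.  The contracted
  vertex (named v1) is labelled 1, the others are lowered by 1; its
  structure is (dq1/dh) \<otimes> (dq2/d(opp h)).\<close>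

definition ord_std :: "('v, 'l, 'o) ograph \<Rightarrow> 'l \<Rightarrow> 'v \<Rightarrow> nat" where
  "ord_std g h = (case g of (G, ord, src) \<Rightarrow>
     (let v1 = gvert G h; v2 = gvert G (gopp G h) in
      (\<lambda>v. if v = v1 then 1 else if v = v2 then 2
           else 2 + card {w \<in> gV G - {v1, v2}. ord w \<le> ord v})))"

definition contract_sign :: "('v, 'l, 'o) ograph \<Rightarrow> 'l \<Rightarrow> int" where
  "contract_sign g h = (case g of (G, ord, src) \<Rightarrow>
     perm_sign (card (gV G)) (\<lambda>i. ord_std g h (inv_into (gV G) ord i)))"

definition contract :: "('l, 'o) opd \<Rightarrow> ('v, 'l, 'o) ograph \<Rightarrow> 'l \<Rightarrow> ('v, 'l, 'o) ograph" where
  "contract P g h = (case g of (G, ord, src) \<Rightarrow>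
     (let v1 = gvert G h; v2 = gvert G (gopp G h) in
      (\<lparr> gV = gV G - {v2},
         gH = gH G - {h, gopp G h},
         gvert = (\<lambda>x. if gvert G x = v2 then v1 else gvert G x),
         gopp = gopp G,
         gstr = (\<lambda>v. if v = v1 then (mate_deriv P (gstr G v1) h, mate_deriv P (gstr G v2) (gopp G h))
                     else gstr G v) \<rparr>,
       (\<lambda>v. if v = v1 then 1 else ord_std g h v - 1),
       src - {h})))"

definition dE_gen :: "('l, 'o) opd \<Rightarrow> ('v, 'l, 'o) ograph \<Rightarrow> ('v, 'l, 'o) ograph \<Rightarrow> rat" where
  "dE_gen P g = (case g of (G, ord, src) \<Rightarrow>
     (\<lambda>g'. \<Sum>h \<in> {h \<in> src. gvert G h \<noteq> gvert G (gopp G h)}.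
             if contract P g h = g' then of_int (contract_sign g h) else 0))"

definition dE :: "('l, 'o) opd \<Rightarrow> (('v, 'l, 'o) ograph \<Rightarrow> rat) \<Rightarrow> ('v, 'l, 'o) ograph \<Rightarrow> rat" where
  "dE P x = (\<lambda>g'. \<Sum>g \<in> {g. x g \<noteq> 0}. x g * dE_gen P g g')"

end

theory Submission
  imports Defs
begin

(*
  Contracting two distinct edges in the two possible orders gives the same oriented Q-graph up
  to an isomorphism fixing all half-edges, with opposite signs, so the terms of the square of
  the edge differential cancel in pairs modulo the relations; parallel edges do not occur in
  the double sum, since the second one has become a loop.

  The vertex structures agree because contraction of matings, (p, q) \<mapsto> \<partial>p/\<partial>h \<otimes> \<partial>q/\<partial>h',
  is well defined (this is where reversibility enters, through an explicit formula for the
  derivative) and is commutative and associative up to the identifications of the mated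
  species.  The signs are computed from the positions of the endpoints in the vertex ordering
  and compared in each configuration of two edges: disjoint, forming a path, with a common
  source, with a common target.
*)

locale reversible_operad =
  fixes P :: "('l, 'o) opd"
  assumes infinite_labels: "infinite (UNIV :: 'l set)"
    and operad: "operad_on_sets P"
    and reversible: "reversible P"
begin

abbreviation "ops \<equiv> op_set P"
abbreviation "inp \<equiv> op_inp P"
abbreviation "sub \<equiv> op_sub P"
abbreviation "relab \<equiv> op_relab P"
abbreviation "unit_op \<equiv> op_unit P"
abbreviation "rev_op \<equiv> op_rev P"

lemma finite_inp: "p \<in> ops \<Longrightarrow> finite (inp p)"
  using operad by (simp add: operad_on_sets_def)

lemma sub_closed: "p1 \<in> ops \<Longrightarrow> p2 \<in> ops \<Longrightarrow> y \<in> inp p1 \<Longrightarrow> inp p1 \<inter> inp p2 = {} \<Longrightarrow> sub p2 y p1 \<in> ops"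
  using operad by (simp add: operad_on_sets_def)

lemma inp_sub: "p1 \<in> ops \<Longrightarrow> p2 \<in> ops \<Longrightarrow> y \<in> inp p1 \<Longrightarrow> inp p1 \<inter> inp p2 = {} \<Longrightarrow>
    inp (sub p2 y p1) = (inp p1 - {y}) \<union> inp p2"
  using operad by (simp add: operad_on_sets_def)

lemma sub_assoc: "p1 \<in> ops \<Longrightarrow> p2 \<in> ops \<Longrightarrow> p3 \<in> ops \<Longrightarrow> y \<in> inp p1 \<Longrightarrow> z \<in> inp p2 \<Longrightarrow>
    inp p1 \<inter> inp p2 = {} \<Longrightarrow> inp p1 \<inter> inp p3 = {} \<Longrightarrow> inp p2 \<inter> inp p3 = {} \<Longrightarrow>
    sub p3 z (sub p2 y p1) = sub (sub p3 z p2) y p1"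
  using operad by (simp add: operad_on_sets_def)

lemma sub_commute: "p1 \<in> ops \<Longrightarrow> p2 \<in> ops \<Longrightarrow> p3 \<in> ops \<Longrightarrow> y \<in> inp p1 \<Longrightarrow> z \<in> inp p1 \<Longrightarrow> y \<noteq> z \<Longrightarrow>
    inp p1 \<inter> inp p2 = {} \<Longrightarrow> inp p1 \<inter> inp p3 = {} \<Longrightarrow> inp p2 \<inter> inp p3 = {} \<Longrightarrow>
    sub p3 z (sub p2 y p1) = sub p2 y (sub p3 z p1)"
  using operad by (simp add: operad_on_sets_def)

lemma relab_closed: "p \<in> ops \<Longrightarrow> inj_on f (inp p) \<Longrightarrow> relab f p \<in> ops"
  using operad by (simp add: operad_on_sets_def)

lemma inp_relab: "p \<in> ops \<Longrightarrow> inj_on f (inp p) \<Longrightarrow> inp (relab f p) = f ` inp p"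
  using operad by (simp add: operad_on_sets_def)

lemma relab_id_on: "p \<in> ops \<Longrightarrow> (\<And>x. x \<in> inp p \<Longrightarrow> f x = x) \<Longrightarrow> relab f p = p"
  using operad by (simp add: operad_on_sets_def)

lemma relab_relab: "p \<in> ops \<Longrightarrow> inj_on f (inp p) \<Longrightarrow> inj_on g (f ` inp p) \<Longrightarrow>
    relab g (relab f p) = relab (g \<circ> f) p"
  using operad by (simp add: operad_on_sets_def)

lemma relab_sub: "p1 \<in> ops \<Longrightarrow> p2 \<in> ops \<Longrightarrow> y \<in> inp p1 \<Longrightarrow> inp p1 \<inter> inp p2 = {} \<Longrightarrow>
    inj_on f (inp p1 \<union> inp p2) \<Longrightarrow> relab f (sub p2 y p1) = sub (relab f p2) (f y) (relab f p1)"
  using operad by (simp add: operad_on_sets_def)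

lemma unit_closed: "unit_op x \<in> ops"
  and inp_unit: "inp (unit_op x) = {x}"
  using operad by (simp add: operad_on_sets_def)+

lemma relab_unit: "relab f (unit_op x) = unit_op (f x)"
  using operad by (simp add: operad_on_sets_def)

lemma sub_unit_right: "p \<in> ops \<Longrightarrow> y \<notin> inp p \<Longrightarrow> sub p y (unit_op y) = p"
  using operad by (simp add: operad_on_sets_def)

lemma rev_closed: "p \<in> ops \<Longrightarrow> x \<in> inp p \<Longrightarrow> y \<notin> inp p \<Longrightarrow> rev_op x y p \<in> ops"
  using reversible by (simp add: reversible_def)

lemma inp_rev: "p \<in> ops \<Longrightarrow> x \<in> inp p \<Longrightarrow> y \<notin> inp p \<Longrightarrow> inp (rev_op x y p) = (inp p - {x}) \<union> {y}"
  using reversible by (simp add: reversible_def)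

lemma rev_rev: "p \<in> ops \<Longrightarrow> x \<in> inp p \<Longrightarrow> y \<notin> inp p \<Longrightarrow> rev_op y x (rev_op x y p) = p"
  using reversible by (simp add: reversible_def)

lemma rev_trans: "p \<in> ops \<Longrightarrow> x \<in> inp p \<Longrightarrow> y \<in> inp p \<Longrightarrow> x \<noteq> y \<Longrightarrow> z \<notin> inp p \<Longrightarrow>
    rev_op x y (rev_op y z p) = rev_op x z p"
  using reversible by (simp add: reversible_def)

lemma rev_sub_outer: "p1 \<in> ops \<Longrightarrow> p2 \<in> ops \<Longrightarrow> y \<in> inp p1 \<Longrightarrow> inp p1 \<inter> inp p2 = {} \<Longrightarrow>
    z \<notin> inp p1 \<Longrightarrow> z \<notin> inp p2 \<Longrightarrow> x \<in> inp p1 \<Longrightarrow> x \<noteq> y \<Longrightarrow>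
    rev_op x z (sub p2 y p1) = sub p2 y (rev_op x z p1)"
  using reversible by (simp add: reversible_def)

lemma rev_sub_inner: "p1 \<in> ops \<Longrightarrow> p2 \<in> ops \<Longrightarrow> y \<in> inp p1 \<Longrightarrow> inp p1 \<inter> inp p2 = {} \<Longrightarrow>
    z \<notin> inp p1 \<Longrightarrow> z \<notin> inp p2 \<Longrightarrow> x \<in> inp p2 \<Longrightarrow>
    rev_op x z (sub p2 y p1) = sub (rev_op y z p1) y (rev_op x y p2)"
  using reversible by (simp add: reversible_def)

lemma relab_rev: "p \<in> ops \<Longrightarrow> x \<in> inp p \<Longrightarrow> z \<notin> inp p \<Longrightarrow> inj_on f (insert z (inp p)) \<Longrightarrow>
    relab f (rev_op x z p) = rev_op (f x) (f z) (relab f p)"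
  using reversible by (simp add: reversible_def)

lemma fresh_label: "finite (A :: 'l set) \<Longrightarrow> \<exists>w. w \<notin> A"
  by (rule ex_new_if_finite[OF infinite_labels])

lemma inj_on_id_upd: "z \<notin> A - {x} \<Longrightarrow> inj_on (id(x := z)) A"
  unfolding inj_on_def by auto

lemma relab_id_upd_fresh: "p \<in> ops \<Longrightarrow> x \<notin> inp p \<Longrightarrow> relab (id(x := z)) p = p"
  by (rule relab_id_on) auto

lemma rev_rev_eq_relab:
  assumes "p \<in> ops" "x \<in> inp p" "y \<notin> inp p" "z \<notin> inp p - {x}" "z \<noteq> y"
  shows "rev_op y z (rev_op x y p) = relab (id(x := z)) p"
proof -
  let ?q = "rev_op x y p"
  have q: "?q \<in> ops" "inp ?q = (inp p - {x}) \<union> {y}"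
    using rev_closed inp_rev assms by auto
  have "relab (id(x := z)) (rev_op y x ?q) = rev_op y z (relab (id(x := z)) ?q)"
    using relab_rev[OF q(1), of y x "id(x := z)"] q(2) assms inj_on_id_upd[of z "insert x (inp ?q)" x]
    by auto
  also have "relab (id(x := z)) ?q = ?q"
    by (rule relab_id_upd_fresh) (use q assms in auto)
  finally have "relab (id(x := z)) (rev_op y x ?q) = rev_op y z ?q" .
  then show ?thesis
    using rev_rev assms by simp
qed

lemma sub_rename_input:
  assumes "X \<in> ops" "Y \<in> ops" "w \<in> inp Y" "inp X \<inter> inp Y = {}" "w' \<notin> inp X" "w' \<notin> inp Y"
  shows "sub X w Y = sub X w' (relab (id(w := w')) Y)"
proof -
  have wX: "w \<notin> inp X" using assms by auto
  have "inp Y \<inter> inp X = {}" "inj_on (id(w := w')) (inp Y \<union> inp X)"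
    using assms by (auto intro!: inj_on_id_upd)
  then have "relab (id(w := w')) (sub X w Y) = sub (relab (id(w := w')) X) w' (relab (id(w := w')) Y)"
    using relab_sub[OF assms(2,1,3)] by simp
  moreover have "relab (id(w := w')) (sub X w Y) = sub X w Y"
    using relab_id_upd_fresh sub_closed inp_sub assms wX by (simp add: Int_commute)
  ultimately show ?thesis
    using relab_id_upd_fresh[OF assms(1) wX] by simp
qed

lemma rev_unit: "y \<noteq> z \<Longrightarrow> rev_op y z (unit_op y) = unit_op z"
proof -
  assume yz: "y \<noteq> z"
  obtain x where x: "x \<notin> {y, z}" using fresh_label[of "{y, z}"] by auto
  let ?p = "rev_op y x (unit_op y)"
  have p: "?p \<in> ops" "inp ?p = {x}"
    using rev_closed inp_rev unit_closed inp_unit x by auto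
  have "rev_op x z ?p = rev_op x z (sub ?p y (unit_op y))"
    using sub_unit_right p x by auto
  also have "\<dots> = sub (rev_op y z (unit_op y)) y (rev_op x y ?p)"
    using rev_sub_inner[OF unit_closed p(1)] p inp_unit x yz by auto
  also have "rev_op x y ?p = unit_op y"
    using rev_rev unit_closed inp_unit x by auto
  also have "sub (rev_op y z (unit_op y)) y (unit_op y) = rev_op y z (unit_op y)"
    using sub_unit_right rev_closed inp_rev unit_closed inp_unit yz by auto
  finally have "rev_op y z (unit_op y) = rev_op x z ?p" ..
  also have "\<dots> = relab (id(y := z)) (unit_op y)"
    using rev_rev_eq_relab unit_closed inp_unit x yz by auto
  finally show ?thesis
    using relab_unit by simp
qed

lemma sub_unit_eq_relab:
  assumes "X \<in> ops" "w \<in> inp X" "a \<notin> inp X"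
  shows "sub (unit_op a) w X = relab (id(w := a)) X"
proof -
  obtain z where z: "z \<notin> inp X \<union> {a}"
    using fresh_label[of "inp X \<union> {a}"] finite_inp assms by auto
  have aw: "a \<noteq> w" using assms by auto
  have c: "sub (unit_op a) w X \<in> ops" "inp (sub (unit_op a) w X) = (inp X - {w}) \<union> {a}"
    using sub_closed inp_sub unit_closed inp_unit assms by auto
  have "rev_op a z (sub (unit_op a) w X) = sub (rev_op w z X) w (rev_op a w (unit_op a))"
    using rev_sub_inner[OF assms(1) unit_closed assms(2)] assms inp_unit z by auto
  also have "\<dots> = rev_op w z X"
  proof -
    have "rev_op w z X \<in> ops" "w \<notin> inp (rev_op w z X)"
      using rev_closed inp_rev assms z by auto
    then show ?thesis
      using rev_unit[OF aw] sub_unit_right by simp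
  qed
  finally have "sub (unit_op a) w X = rev_op z a (rev_op w z X)"
    using rev_rev[OF c(1), of a z] c(2) z by auto
  also have "\<dots> = relab (id(w := a)) X"
    using rev_rev_eq_relab assms z by auto
  finally show ?thesis .
qed

definition is_mating :: "'o \<times> 'o \<Rightarrow> bool" where
  "is_mating q \<longleftrightarrow> fst q \<in> ops \<and> snd q \<in> ops \<and> inp (fst q) \<inter> inp (snd q) = {}"

abbreviation "labels \<equiv> mating_labels P"

lemma mating_wf_iff: "mating_wf P K q \<longleftrightarrow> is_mating q \<and> labels q = K"
  unfolding mating_wf_def is_mating_def by auto

lemma labels_pair: "labels (x, y) = inp x \<union> inp y"
  unfolding mating_labels_def by simp

lemma labels_swap: "labels (y, x) = labels (x, y)"
  unfolding mating_labels_def by auto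

lemma is_mating_swap: "is_mating (y, x) \<longleftrightarrow> is_mating (x, y)"
  unfolding is_mating_def by auto

lemma finite_labels: "is_mating q \<Longrightarrow> finite (labels q)"
  unfolding is_mating_def mating_labels_def using finite_inp by auto

lemma fresh_for_mating: "is_mating q \<Longrightarrow> \<exists>w. w \<notin> labels q"
  using fresh_label finite_labels by blast

lemma sub_rev_closed:
  assumes "x \<in> ops" "y \<in> ops" "inp x \<inter> inp y = {}" "a \<in> inp y" "w \<notin> inp x \<union> inp y"
  shows "sub x w (rev_op a w y) \<in> ops" "inp (sub x w (rev_op a w y)) = (inp x \<union> inp y) - {a}"
proof -
  have r: "rev_op a w y \<in> ops" "inp (rev_op a w y) = inp y - {a} \<union> {w}"
    using rev_closed inp_rev assms by auto
  then have "w \<in> inp (rev_op a w y)" "inp (rev_op a w y) \<inter> inp x = {}"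
    using assms by auto
  then show "sub x w (rev_op a w y) \<in> ops" "inp (sub x w (rev_op a w y)) = (inp x \<union> inp y) - {a}"
    using sub_closed inp_sub r assms by auto
qed

lemma sub_rev_fresh_indep:
  assumes "x \<in> ops" "y \<in> ops" "inp x \<inter> inp y = {}" "a \<in> inp y"
    and "w \<notin> inp x \<union> inp y" "w' \<notin> inp x \<union> inp y"
  shows "sub x w (rev_op a w y) = sub x w' (rev_op a w' y)"
proof (cases "w = w'")
  case False
  have r: "rev_op a w y \<in> ops" "inp (rev_op a w y) = inp y - {a} \<union> {w}"
    using rev_closed inp_rev assms by auto
  have "sub x w (rev_op a w y) = sub x w' (relab (id(w := w')) (rev_op a w y))"
    by (rule sub_rename_input[OF assms(1) r(1)]) (use r(2) assms False in auto)
  also have "relab (id(w := w')) (rev_op a w y) = rev_op a w' (relab (id(w := w')) y)"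
    using relab_rev[OF assms(2,4), of w "id(w := w')"] inj_on_id_upd[of w' "insert w (inp y)" w] assms
    by auto
  also have "relab (id(w := w')) y = y"
    using relab_id_upd_fresh assms by auto
  finally show ?thesis .
qed simp

text \<open>For a mating \<open>x \<otimes> y\<close> with \<open>a\<close> an input of \<open>y\<close> and a fresh label \<open>w\<close>, the second
  identification (with \<open>p\<^sub>3\<close> the unit) gives \<open>x \<otimes> y = (x \<circ>\<^sub>w r\<^sub>a\<^sub>,\<^sub>w y) \<otimes> u\<close>; this is
  the explicit formula for the derivative.\<close>

definition deriv_via :: "'l \<Rightarrow> 'l \<Rightarrow> 'o \<times> 'o \<Rightarrow> 'o" where
  "deriv_via w a q = (if a \<in> inp (snd q) then sub (fst q) w (rev_op a w (snd q))
                      else sub (snd q) w (rev_op a w (fst q)))"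

definition deriv :: "'l \<Rightarrow> 'o \<times> 'o \<Rightarrow> 'o" where
  "deriv a q = deriv_via (SOME w. w \<notin> labels q) a q"

lemma deriv_via_indep:
  assumes "is_mating q" "a \<in> labels q" "w \<notin> labels q" "w' \<notin> labels q"
  shows "deriv_via w a q = deriv_via w' a q"
proof -
  obtain x y where q: "q = (x, y)" by (cases q)
  have x: "x \<in> ops" "y \<in> ops" "inp x \<inter> inp y = {}" "inp y \<inter> inp x = {}"
    using assms(1) q unfolding is_mating_def by auto
  have ws: "w \<notin> inp x \<union> inp y" "w' \<notin> inp x \<union> inp y" "w \<notin> inp y \<union> inp x" "w' \<notin> inp y \<union> inp x"
    using assms(3,4) q labels_pair by auto
  show ?thesis
  proof (cases "a \<in> inp y")
    case True
    then show ?thesis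
      using sub_rev_fresh_indep[OF x(1-3) True ws(1,2)] unfolding q deriv_via_def by simp
  next
    case False
    then have "a \<in> inp x" using assms(2) q labels_pair by auto
    then show ?thesis
      using sub_rev_fresh_indep[OF x(2,1,4) _ ws(3,4)] False unfolding q deriv_via_def by simp
  qed
qed

lemma deriv_eq_deriv_via: "is_mating q \<Longrightarrow> a \<in> labels q \<Longrightarrow> w \<notin> labels q \<Longrightarrow> deriv a q = deriv_via w a q"
  unfolding deriv_def by (rule deriv_via_indep) (use someI_ex[OF fresh_for_mating] in auto)

lemma deriv_pair_snd:
  "is_mating (x, y) \<Longrightarrow> a \<in> inp y \<Longrightarrow> w \<notin> inp x \<union> inp y \<Longrightarrow> deriv a (x, y) = sub x w (rev_op a w y)"
  using deriv_eq_deriv_via[of "(x, y)" a w] unfolding deriv_via_def labels_pair by simp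

lemma deriv_pair_fst:
  "is_mating (x, y) \<Longrightarrow> a \<in> inp x \<Longrightarrow> w \<notin> inp x \<union> inp y \<Longrightarrow> deriv a (x, y) = sub y w (rev_op a w x)"
  using deriv_eq_deriv_via[of "(x, y)" a w] unfolding deriv_via_def labels_pair is_mating_def by auto

lemma deriv_closed:
  assumes "is_mating q" "a \<in> labels q"
  shows "deriv a q \<in> ops" "inp (deriv a q) = labels q - {a}"
proof -
  obtain x y where q: "q = (x, y)" by (cases q)
  obtain w where w: "w \<notin> labels q" using fresh_for_mating assms by blast
  have x: "x \<in> ops" "y \<in> ops" "inp x \<inter> inp y = {}" "inp y \<inter> inp x = {}"
    using assms(1) q unfolding is_mating_def by auto
  have l: "labels q = inp x \<union> inp y" using q labels_pair by auto
  have "deriv a q \<in> ops \<and> inp (deriv a q) = labels q - {a}"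
  proof (cases "a \<in> inp y")
    case True
    then show ?thesis
      using sub_rev_closed[OF x(1-3) True] deriv_eq_deriv_via[OF assms w] w l
      unfolding q deriv_via_def by auto
  next
    case False
    then have "a \<in> inp x" using assms(2) l by auto
    then show ?thesis
      using sub_rev_closed[OF x(2,1,4)] False deriv_eq_deriv_via[OF assms w] w l
      unfolding q deriv_via_def by auto
  qed
  then show "deriv a q \<in> ops" "inp (deriv a q) = labels q - {a}" by auto
qed

lemma deriv_swap:
  assumes "is_mating (x, y)" "a \<in> labels (x, y)"
  shows "deriv a (y, x) = deriv a (x, y)"
proof -
  obtain w where w: "w \<notin> labels (x, y)" using fresh_for_mating assms by blast
  have "inp x \<inter> inp y = {}" using assms unfolding is_mating_def by auto
  then show ?thesis
    using deriv_eq_deriv_via[OF assms w] deriv_eq_deriv_via[of "(y, x)" a w] assms w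
    unfolding deriv_via_def labels_swap is_mating_swap labels_pair by auto
qed

context
  fixes p1 p2 p3 :: 'o and y w :: 'l
  assumes move_ops: "p1 \<in> ops" "p2 \<in> ops" "p3 \<in> ops" and move_y: "y \<in> inp p2"
    and move_disj: "inp p1 \<inter> inp p2 = {}" "inp p1 \<inter> inp p3 = {}" "inp p2 \<inter> inp p3 = {}"
    and move_fresh: "w \<notin> inp p1" "w \<notin> inp p2" "w \<notin> inp p3"
begin

lemma move_rev: "rev_op y w p2 \<in> ops" "inp (rev_op y w p2) = inp p2 - {y} \<union> {w}"
  using rev_closed inp_rev move_ops move_y move_fresh by auto

lemma move_rev_facts: "w \<in> inp (rev_op y w p2)" "y \<notin> inp (rev_op y w p2)"
    "inp (rev_op y w p2) \<inter> inp p1 = {}"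
  using move_rev move_y move_fresh move_disj by auto

lemma move_target: "sub p1 w (rev_op y w p2) \<in> ops"
    "inp (sub p1 w (rev_op y w p2)) = (inp p2 - {y}) \<union> inp p1"
  using sub_closed inp_sub move_rev move_rev_facts move_ops move_fresh by auto

lemma move_matings:
  "is_mating (sub p3 y p2, p1)" "is_mating (p3, sub p1 w (rev_op y w p2))"
  "labels (sub p3 y p2, p1) = (inp p2 - {y}) \<union> inp p3 \<union> inp p1"
  "labels (p3, sub p1 w (rev_op y w p2)) = (inp p2 - {y}) \<union> inp p3 \<union> inp p1"
  using sub_closed[OF move_ops(2,3) move_y] inp_sub[OF move_ops(2,3) move_y] move_target
    move_ops move_disj
  unfolding is_mating_def labels_pair fst_conv snd_conv by auto

lemma deriv_via_move_p3:
  assumes a: "a \<in> inp p3"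
  shows "deriv_via w a (sub p3 y p2, p1) = deriv_via y a (p3, sub p1 w (rev_op y w p2))"
proof -
  have y: "y \<notin> inp p1" "y \<notin> inp p3" using move_y move_disj by auto
  have a1: "a \<notin> inp p1" "a \<notin> inp (sub p1 w (rev_op y w p2))"
    using a move_target move_disj by auto
  have A: "rev_op a y p3 \<in> ops" "inp (rev_op a y p3) = inp p3 - {a} \<union> {y}"
    using rev_closed inp_rev move_ops a y by auto
  have "deriv_via w a (sub p3 y p2, p1) = sub p1 w (rev_op a w (sub p3 y p2))"
    unfolding deriv_via_def using a1 by simp
  also have "rev_op a w (sub p3 y p2) = sub (rev_op y w p2) y (rev_op a y p3)"
    by (rule rev_sub_inner[OF move_ops(2,3) move_y move_disj(3) move_fresh(2,3) a])
  also have "sub p1 w (sub (rev_op y w p2) y (rev_op a y p3)) = sub (sub p1 w (rev_op y w p2)) y (rev_op a y p3)"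
    by (rule sub_assoc[OF A(1) move_rev(1) move_ops(1)])
      (use A(2) move_rev move_rev_facts move_disj move_fresh y in auto)
  also have "\<dots> = deriv_via y a (p3, sub p1 w (rev_op y w p2))"
    unfolding deriv_via_def using a1 by simp
  finally show ?thesis .
qed

lemma deriv_via_move_p1:
  assumes a: "a \<in> inp p1"
  shows "deriv_via w a (sub p3 y p2, p1) = deriv_via y a (p3, sub p1 w (rev_op y w p2))"
proof -
  have y1: "y \<notin> inp p1" using move_y move_disj by auto
  have aT: "a \<in> inp (sub p1 w (rev_op y w p2))" using move_target a by auto
  have A: "rev_op a w p1 \<in> ops" "inp (rev_op a w p1) = inp p1 - {a} \<union> {w}"
    using rev_closed inp_rev move_ops a move_fresh by auto
  have "deriv_via w a (sub p3 y p2, p1) = sub (sub p3 y p2) w (rev_op a w p1)"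
    unfolding deriv_via_def using a by simp
  also have "\<dots> = sub p3 y (sub p2 w (rev_op a w p1))"
    by (rule sub_assoc[OF A(1) move_ops(2,3) _ move_y _ _ move_disj(3), symmetric])
      (use A(2) move_disj move_fresh in auto)
  also have "sub p2 w (rev_op a w p1) = sub (rev_op w y (rev_op y w p2)) w (rev_op a w p1)"
    using rev_rev[OF move_ops(2) move_y move_fresh(2)] by simp
  also have "\<dots> = rev_op a y (sub p1 w (rev_op y w p2))"
    by (rule rev_sub_inner[OF move_rev(1) move_ops(1) move_rev_facts(1,3,2) y1 a, symmetric])
  also have "sub p3 y (rev_op a y (sub p1 w (rev_op y w p2))) = deriv_via y a (p3, sub p1 w (rev_op y w p2))"
    unfolding deriv_via_def using aT by simp
  finally show ?thesis .
qed

lemma deriv_via_move_p2: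
  assumes a: "a \<in> inp p2" "a \<noteq> y"
  shows "deriv_via w a (sub p3 y p2, p1) = deriv_via y a (p3, sub p1 w (rev_op y w p2))"
proof -
  have y1: "y \<notin> inp p1" using move_y move_disj by auto
  have a1: "a \<notin> inp p1" "a \<noteq> w" using a move_disj move_fresh by auto
  have aT: "a \<in> inp (sub p1 w (rev_op y w p2))" "a \<in> inp (rev_op y w p2)"
    using move_target move_rev a by auto
  have A: "rev_op a w p2 \<in> ops" "inp (rev_op a w p2) = inp p2 - {a} \<union> {w}"
    using rev_closed inp_rev move_ops a move_fresh by auto
  have "deriv_via w a (sub p3 y p2, p1) = sub p1 w (rev_op a w (sub p3 y p2))"
    unfolding deriv_via_def using a1 by simp
  also have "rev_op a w (sub p3 y p2) = sub p3 y (rev_op a w p2)"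
    by (rule rev_sub_outer[OF move_ops(2,3) move_y move_disj(3) move_fresh(2,3) a])
  also have "sub p1 w (sub p3 y (rev_op a w p2)) = sub p3 y (sub p1 w (rev_op a w p2))"
    by (rule sub_commute[OF A(1) move_ops(3,1)])
      (use A(2) a move_y move_disj move_fresh in auto)
  also have "rev_op a w p2 = rev_op a y (rev_op y w p2)"
    using rev_trans[OF move_ops(2) a(1) move_y a(2) move_fresh(2)] by simp
  also have "sub p1 w (rev_op a y (rev_op y w p2)) = rev_op a y (sub p1 w (rev_op y w p2))"
    by (rule rev_sub_outer[OF move_rev(1) move_ops(1) move_rev_facts(1,3,2) y1 aT(2) a1(2), symmetric])
  also have "sub p3 y (rev_op a y (sub p1 w (rev_op y w p2))) = deriv_via y a (p3, sub p1 w (rev_op y w p2))"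
    unfolding deriv_via_def using aT by simp
  finally show ?thesis .
qed

lemma deriv_move:
  assumes "a \<in> labels (sub p3 y p2, p1)"
  shows "deriv a (sub p3 y p2, p1) = deriv a (p3, sub p1 w (rev_op y w p2))"
proof -
  have "w \<notin> labels (sub p3 y p2, p1)" "y \<notin> labels (p3, sub p1 w (rev_op y w p2))"
    "a \<in> labels (p3, sub p1 w (rev_op y w p2))"
    using move_matings move_fresh move_y move_disj assms by auto
  then have "deriv a (sub p3 y p2, p1) = deriv_via w a (sub p3 y p2, p1)"
    "deriv a (p3, sub p1 w (rev_op y w p2)) = deriv_via y a (p3, sub p1 w (rev_op y w p2))"
    using deriv_eq_deriv_via[OF move_matings(1) assms] deriv_eq_deriv_via[OF move_matings(2)] by auto
  moreover consider "a \<in> inp p3" | "a \<in> inp p1" | "a \<in> inp p2" "a \<noteq> y"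
    using assms move_matings by auto
  ultimately show ?thesis
    using deriv_via_move_p1 deriv_via_move_p2 deriv_via_move_p3 by metis
qed

end

lemma mate_step_invariant:
  assumes "mate_step P s t"
  shows "is_mating s \<and> is_mating t \<and> labels s = labels t \<and> (\<forall>a \<in> labels s. deriv a s = deriv a t)"
  using assms
proof cases
  case (swap p p')
  then have "is_mating (p, p')" unfolding is_mating_def by auto
  then show ?thesis
    using swap deriv_swap labels_swap is_mating_swap by metis
next
  case (move p1 p2 p3 y w)
  then show ?thesis
    using move_matings deriv_move by simp
qed

lemma mate_eq_invariant:
  assumes "mate_eq P q q'" "is_mating q"
  shows "is_mating q' \<and> labels q' = labels q \<and> (\<forall>a \<in> labels q. deriv a q' = deriv a q)"
  using assms(1) unfolding mate_eq_def
proof (induction rule: equivclp_induct)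
  case base
  then show ?case using assms(2) by auto
next
  case (step y z)
  then show ?case using mate_step_invariant by metis
qed

lemma mate_eq_refl: "mate_eq P q q"
  unfolding mate_eq_def by simp

lemma mate_eq_trans: "mate_eq P q q' \<Longrightarrow> mate_eq P q' q'' \<Longrightarrow> mate_eq P q q''"
  unfolding mate_eq_def by (rule equivclp_trans)

lemma mate_eq_swap: "is_mating (x, y) \<Longrightarrow> mate_eq P (x, y) (y, x)"
  unfolding mate_eq_def is_mating_def by (auto intro: mate_step.swap)

lemma sub_unit_relab_inverse:
  assumes "y \<in> ops" "a \<in> inp y" "w \<notin> inp y"
  shows "sub (unit_op a) w (relab (id(a := w)) y) = y"
proof -
  have inj: "inj_on (id(a := w)) (inp y)" by (rule inj_on_id_upd) (use assms in auto)
  have Y: "relab (id(a := w)) y \<in> ops" "inp (relab (id(a := w)) y) = inp y - {a} \<union> {w}"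
    using relab_closed[OF assms(1) inj] inp_relab[OF assms(1) inj] assms by (auto simp: image_def)
  have "sub (unit_op a) w (relab (id(a := w)) y) = relab (id(w := a)) (relab (id(a := w)) y)"
    by (rule sub_unit_eq_relab[OF Y(1)]) (use Y(2) assms in auto)
  also have "\<dots> = relab (id(w := a) \<circ> id(a := w)) y"
  proof (rule relab_relab[OF assms(1) inj])
    have "id(a := w) ` inp y = inp y - {a} \<union> {w}"
      using Y(2) inp_relab[OF assms(1) inj] by simp
    moreover have "inj_on (id(w := a)) (inp y - {a} \<union> {w})"
      by (rule inj_on_id_upd) (use assms in auto)
    ultimately show "inj_on (id(w := a)) (id(a := w) ` inp y)" by simp
  qed
  also have "\<dots> = y"
    by (rule relab_id_on[OF assms(1)]) (use assms in auto)
  finally show ?thesis .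
qed

lemma rev_relab_id_upd:
  assumes "y \<in> ops" "a \<in> inp y" "w \<notin> inp y" "w' \<notin> inp y" "w' \<noteq> w"
  shows "rev_op w w' (relab (id(a := w)) y) = rev_op a w' y"
proof -
  have "relab (id(a := w)) (rev_op a w' y) = rev_op w w' (relab (id(a := w)) y)"
    using relab_rev[OF assms(1,2,4), of "id(a := w)"] inj_on_id_upd[of w "insert w' (inp y)" a] assms
    by auto
  moreover have "relab (id(a := w)) (rev_op a w' y) = rev_op a w' y"
    by (rule relab_id_upd_fresh) (use rev_closed inp_rev assms in auto)
  ultimately show ?thesis by simp
qed

lemma mate_eq_deriv_unit_snd:
  assumes "is_mating (x, y)" "a \<in> inp y"
  shows "mate_eq P (x, y) (deriv a (x, y), unit_op a)"
proof -
  have x: "x \<in> ops" "y \<in> ops" "inp x \<inter> inp y = {}" using assms unfolding is_mating_def by auto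
  obtain w where w: "w \<notin> inp x \<union> inp y"
    using fresh_label finite_inp x by (metis finite_Un)
  obtain w' where w': "w' \<notin> inp x \<union> inp y \<union> {w}"
    using fresh_label finite_inp x by (metis finite_Un finite_insert sup_commute insert_is_Un)
  define Y where "Y = relab (id(a := w)) y"
  have inj: "inj_on (id(a := w)) (inp y)" by (rule inj_on_id_upd) (use w in auto)
  have Y: "Y \<in> ops" "inp Y = inp y - {a} \<union> {w}"
    using relab_closed[OF x(2) inj] inp_relab[OF x(2) inj] assms w unfolding Y_def by (auto simp: image_def)
  have "mate_eq P (x, y) (sub (unit_op a) w Y, x)"
    using mate_eq_swap[OF assms(1)] sub_unit_relab_inverse[OF x(2) assms(2)] w unfolding Y_def by auto
  moreover have "mate_eq P (sub (unit_op a) w Y, x) (unit_op a, sub x w' (rev_op w w' Y))"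
    unfolding mate_eq_def
    by (rule r_into_equivclp, rule mate_step.move) (use x Y unit_closed inp_unit assms w w' in auto)
  moreover have "rev_op w w' Y = rev_op a w' y"
    unfolding Y_def by (rule rev_relab_id_upd) (use x assms w w' in auto)
  moreover have "is_mating (unit_op a, sub x w' (rev_op a w' y))"
    using sub_rev_closed[OF x assms(2)] unit_closed inp_unit w' unfolding is_mating_def by auto
  moreover have "sub x w' (rev_op a w' y) = deriv a (x, y)"
    using deriv_pair_snd assms w' by auto
  ultimately show ?thesis
    using mate_eq_swap mate_eq_trans by metis
qed

lemma mate_eq_deriv_unit:
  assumes "is_mating q" "a \<in> labels q"
  shows "mate_eq P q (deriv a q, unit_op a)"
proof -
  obtain x y where q: "q = (x, y)" by (cases q)
  show ?thesis
  proof (cases "a \<in> inp y")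
    case True
    then show ?thesis using mate_eq_deriv_unit_snd assms q by auto
  next
    case False
    then have "a \<in> inp x" using assms q labels_pair by auto
    then have "mate_eq P (y, x) (deriv a (y, x), unit_op a)"
      using mate_eq_deriv_unit_snd assms q is_mating_swap by auto
    then show ?thesis
      using mate_eq_swap mate_eq_trans deriv_swap assms q by metis
  qed
qed

lemma deriv_unit_right:
  assumes "p \<in> ops" "a \<notin> inp p"
  shows "deriv a (p, unit_op a) = p"
proof -
  obtain w where w: "w \<notin> inp p \<union> {a}"
    using fresh_label finite_inp assms by (metis finite_Un finite.intros)
  have "is_mating (p, unit_op a)"
    using assms unit_closed inp_unit unfolding is_mating_def by auto
  then have "deriv a (p, unit_op a) = sub p w (rev_op a w (unit_op a))"
    using deriv_pair_snd inp_unit w by auto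
  also have "\<dots> = p"
    using rev_unit sub_unit_right assms w by auto
  finally show ?thesis .
qed

lemma mate_deriv_eq_deriv:
  assumes "is_mating q" "a \<in> labels q"
  shows "mate_deriv P q a = deriv a q"
  unfolding mate_deriv_def
proof (rule the_equality)
  show "deriv a q \<in> ops \<and> inp (deriv a q) = labels q - {a} \<and> mate_eq P q (deriv a q, unit_op a)"
    using deriv_closed mate_eq_deriv_unit assms by auto
next
  fix p assume p: "p \<in> ops \<and> inp p = labels q - {a} \<and> mate_eq P q (p, unit_op a)"
  then have "deriv a (p, unit_op a) = deriv a q"
    using mate_eq_invariant[of q "(p, unit_op a)"] assms by auto
  then show "p = deriv a q"
    using deriv_unit_right p by auto
qed

definition mate_contract :: "'o \<times> 'o \<Rightarrow> 'l \<Rightarrow> 'o \<times> 'o \<Rightarrow> 'l \<Rightarrow> 'o \<times> 'o" where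
  "mate_contract q1 h1 q2 h2 = (mate_deriv P q1 h1, mate_deriv P q2 h2)"

lemma mate_contract_eq:
  "is_mating q1 \<Longrightarrow> h1 \<in> labels q1 \<Longrightarrow> is_mating q2 \<Longrightarrow> h2 \<in> labels q2 \<Longrightarrow>
    mate_contract q1 h1 q2 h2 = (deriv h1 q1, deriv h2 q2)"
  unfolding mate_contract_def using mate_deriv_eq_deriv by auto

lemma mate_contract_is_mating:
  assumes "is_mating q1" "h1 \<in> labels q1" "is_mating q2" "h2 \<in> labels q2" "labels q1 \<inter> labels q2 = {}"
  shows "is_mating (mate_contract q1 h1 q2 h2)"
    and "labels (mate_contract q1 h1 q2 h2) = (labels q1 - {h1}) \<union> (labels q2 - {h2})"
proof -
  have "deriv h1 q1 \<in> ops" "deriv h2 q2 \<in> ops"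
    "inp (deriv h1 q1) = labels q1 - {h1}" "inp (deriv h2 q2) = labels q2 - {h2}"
    using deriv_closed assms by auto
  then show "is_mating (mate_contract q1 h1 q2 h2)"
    and "labels (mate_contract q1 h1 q2 h2) = (labels q1 - {h1}) \<union> (labels q2 - {h2})"
    using mate_contract_eq[OF assms(1-4)] assms(5) by (auto simp: is_mating_def labels_pair)
qed

lemma mate_contract_commute:
  assumes "is_mating q1" "h1 \<in> labels q1" "is_mating q2" "h2 \<in> labels q2" "labels q1 \<inter> labels q2 = {}"
  shows "mate_eq P (mate_contract q1 h1 q2 h2) (mate_contract q2 h2 q1 h1)"
  using mate_contract_eq[OF assms(1-4)] mate_contract_eq[OF assms(3,4,1,2)] mate_eq_swap
    mate_contract_is_mating[OF assms] by auto

lemma mate_contract_cong_left: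
  assumes "mate_eq P q1 q1'" "is_mating q1" "h1 \<in> labels q1"
  shows "mate_contract q1 h1 q2 h2 = mate_contract q1' h1 q2 h2"
  using mate_eq_invariant[OF assms(1,2)] mate_deriv_eq_deriv assms unfolding mate_contract_def by auto

lemma mate_contract_cong_right:
  assumes "mate_eq P q2 q2'" "is_mating q2" "h2 \<in> labels q2"
  shows "mate_contract q1 h1 q2 h2 = mate_contract q1 h1 q2' h2"
  using mate_eq_invariant[OF assms(1,2)] mate_deriv_eq_deriv assms unfolding mate_contract_def by auto

lemma deriv_eq_rev_deriv:
  assumes "is_mating q" "h \<in> labels q" "k \<in> labels q" "h \<noteq> k"
  shows "deriv k q = rev_op k h (deriv h q)"
proof -
  define X where "X = deriv h q"
  have X: "X \<in> ops" "inp X = labels q - {h}" "k \<in> inp X" "h \<notin> inp X"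
    using deriv_closed assms unfolding X_def by auto
  obtain v where v: "v \<notin> labels q" using fresh_for_mating assms by blast
  have Xu: "is_mating (X, unit_op h)" "labels (X, unit_op h) = labels q"
    using X unit_closed inp_unit assms unfolding is_mating_def labels_pair by auto
  have "deriv k q = deriv k (X, unit_op h)"
    using mate_eq_invariant[OF mate_eq_deriv_unit[OF assms(1,2)] assms(1)] assms X_def by auto
  also have "\<dots> = deriv_via v k (X, unit_op h)"
    by (rule deriv_eq_deriv_via) (use Xu v assms in auto)
  also have "\<dots> = sub (unit_op h) v (rev_op k v X)"
    unfolding deriv_via_def using inp_unit assms by auto
  also have "\<dots> = relab (id(v := h)) (rev_op k v X)"
    by (rule sub_unit_eq_relab) (use rev_closed inp_rev X v assms in auto)
  also have "\<dots> = rev_op k h (relab (id(v := h)) X)"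
    using relab_rev[OF X(1,3), of v "id(v := h)"] inj_on_id_upd[of h "insert v (inp X)" v] X v assms
    by auto
  also have "relab (id(v := h)) X = X"
    by (rule relab_id_upd_fresh) (use X v in auto)
  finally show ?thesis unfolding X_def .
qed

lemma mate_eq_deriv_move:
  assumes "x \<in> ops" "y \<in> ops" "z \<in> ops"
    and "inp x \<inter> inp y = {}" "inp x \<inter> inp z = {}" "inp y \<inter> inp z = {}"
    and "k \<in> inp y" "h \<notin> inp x \<union> inp y \<union> inp z"
  shows "mate_eq P (deriv k (x, y), z) (x, deriv h (rev_op k h y, z))"
proof -
  have fin: "finite (inp x \<union> inp y \<union> inp z \<union> {h})" using finite_inp assms by auto
  obtain w where w: "w \<notin> inp x \<union> inp y \<union> inp z \<union> {h}"
    using fresh_label[OF fin] by blast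
  have fin': "finite (inp x \<union> inp y \<union> inp z \<union> {h} \<union> {w})" using fin by simp
  obtain w' where w': "w' \<notin> inp x \<union> inp y \<union> inp z \<union> {h} \<union> {w}"
    using fresh_label[OF fin'] by blast
  have r: "rev_op k h y \<in> ops" "inp (rev_op k h y) = inp y - {k} \<union> {h}"
    using rev_closed inp_rev assms by auto
  have xy: "is_mating (x, y)" "w \<notin> inp x \<union> inp y"
    using assms w unfolding is_mating_def by auto
  have yz: "is_mating (rev_op k h y, z)" "h \<in> inp (rev_op k h y)" "w' \<notin> inp (rev_op k h y) \<union> inp z"
    using assms r w' unfolding is_mating_def by auto
  have "deriv k (x, y) = sub x w (rev_op k w y)"
    by (rule deriv_pair_snd[OF xy(1) assms(7) xy(2)])
  moreover have "deriv h (rev_op k h y, z) = sub z w' (rev_op h w' (rev_op k h y))"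
    by (rule deriv_pair_fst[OF yz])
  moreover have "rev_op h w' (rev_op k h y) = relab (id(k := w')) y"
    by (rule rev_rev_eq_relab) (use assms w' in auto)
  moreover have "rev_op w w' (rev_op k w y) = relab (id(k := w')) y"
    by (rule rev_rev_eq_relab) (use assms w w' in auto)
  moreover have "mate_eq P (sub x w (rev_op k w y), z) (x, sub z w' (rev_op w w' (rev_op k w y)))"
    unfolding mate_eq_def
    by (rule r_into_equivclp, rule mate_step.move) (use rev_closed inp_rev assms w w' in auto)
  ultimately show ?thesis by simp
qed

lemma mate_contract_assoc:
  assumes "is_mating q1" "is_mating q2" "is_mating q3"
    and "labels q1 \<inter> labels q2 = {}" "labels q1 \<inter> labels q3 = {}" "labels q2 \<inter> labels q3 = {}"
    and "h \<in> labels q1" "h' \<in> labels q2" "k \<in> labels q2" "h' \<noteq> k" "k' \<in> labels q3"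
  shows "mate_eq P (mate_contract (mate_contract q1 h q2 h') k q3 k')
                   (mate_contract q1 h (mate_contract q2 k q3 k') h')"
proof -
  define X1 X2 Y3 where "X1 = deriv h q1" and "X2 = deriv h' q2" and "Y3 = deriv k' q3"
  have X: "X1 \<in> ops" "inp X1 = labels q1 - {h}" "X2 \<in> ops" "inp X2 = labels q2 - {h'}"
    "Y3 \<in> ops" "inp Y3 = labels q3 - {k'}"
    using deriv_closed assms unfolding X1_def X2_def Y3_def by auto
  have X12: "mate_contract q1 h q2 h' = (X1, X2)"
    using mate_contract_eq[OF assms(1,7,2,8)] unfolding X1_def X2_def .
  have X12': "is_mating (X1, X2)" "k \<in> labels (X1, X2)"
    using X assms unfolding is_mating_def labels_pair by auto
  have Z: "mate_contract q2 k q3 k' = (rev_op k h' X2, Y3)"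
    using mate_contract_eq[OF assms(2,9,3,11)] deriv_eq_rev_deriv[OF assms(2,8,9,10)]
    unfolding X2_def Y3_def by simp
  have r: "rev_op k h' X2 \<in> ops" "inp (rev_op k h' X2) = labels q2 - {k}"
    using rev_closed[of X2 k h'] inp_rev[of X2 k h'] X assms by auto
  then have Z': "is_mating (rev_op k h' X2, Y3)" "h' \<in> labels (rev_op k h' X2, Y3)"
    using X assms unfolding is_mating_def labels_pair by auto
  have disj: "inp X1 \<inter> inp X2 = {}" "inp X1 \<inter> inp Y3 = {}" "inp X2 \<inter> inp Y3 = {}"
    "k \<in> inp X2" "h' \<notin> inp X1 \<union> inp X2 \<union> inp Y3"
    unfolding X(2,4,6) using assms(4-11) by auto
  have "mate_contract (mate_contract q1 h q2 h') k q3 k' = (deriv k (X1, X2), Y3)"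
    using mate_contract_eq[OF X12' assms(3,11)] X12 unfolding Y3_def by simp
  moreover have "mate_contract q1 h (mate_contract q2 k q3 k') h' = (X1, deriv h' (rev_op k h' X2, Y3))"
    using mate_contract_eq[OF assms(1,7) Z'] Z unfolding X1_def by simp
  moreover have "mate_eq P (deriv k (X1, X2), Y3) (X1, deriv h' (rev_op k h' X2, Y3))"
    using mate_eq_deriv_move[OF X(1,3,5) disj] .
  ultimately show ?thesis by simp
qed

end

definition move_to :: "nat \<Rightarrow> nat \<Rightarrow> nat \<Rightarrow> nat" where
  "move_to j n = (\<lambda>i. if i = n then j else if j \<le> i \<and> i < n then i + 1 else i)"

lemma sign_move_to: "j \<le> n \<Longrightarrow> permutation (move_to j n) \<and> sign (move_to j n) = (-1) ^ (n - j)"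
proof (induction n)
  case 0
  then have "move_to j 0 = id" unfolding move_to_def by auto
  then show ?case by simp
next
  case (Suc n)
  show ?case
  proof (cases "j = Suc n")
    case True
    then have "move_to j (Suc n) = id" unfolding move_to_def by auto
    then show ?thesis using True by simp
  next
    case False
    then have jn: "j \<le> n" using Suc by auto
    have e: "move_to j (Suc n) = move_to j n \<circ> transpose n (Suc n)"
      using jn unfolding move_to_def by (auto simp: fun_eq_iff transpose_def)
    have "permutation (move_to j (Suc n))"
      using Suc.IH jn e permutation_compose permutation_swap_id by metis
    moreover have "sign (move_to j (Suc n)) = sign (move_to j n) * sign (transpose n (Suc n))"
      using e sign_compose Suc.IH jn permutation_swap_id by metis
    ultimately show ?thesis
      using Suc.IH jn by (simp add: sign_swap_id Suc_diff_le)
  qed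
qed

definition std_pos :: "nat \<Rightarrow> nat \<Rightarrow> nat \<Rightarrow> nat" where
  "std_pos p q i = (if i = p then 1 else if i = q then 2 else i + 2 - of_bool (p < i) - of_bool (q < i))"

definition contraction_sign :: "nat \<Rightarrow> nat \<Rightarrow> int" where
  "contraction_sign p q = (if q < p then 1 else -1) * (-1) ^ (p + q)"

lemma sign_std_pos:
  assumes "1 \<le> p" "p \<le> k" "1 \<le> q" "q \<le> k" "p \<noteq> q"
  shows "sign (\<lambda>i. if i \<in> {1..k} then std_pos p q i else i) = contraction_sign p q"
proof -
  define q' where "q' = (if q < p then q + 1 else q)"
  have "(\<lambda>i. if i \<in> {1..k} then std_pos p q i else i) = move_to 2 q' \<circ> move_to 1 p"
    using assms unfolding std_pos_def move_to_def q'_def by (auto simp: fun_eq_iff)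
  moreover have "2 \<le> q'" using assms unfolding q'_def by auto
  ultimately have "sign (\<lambda>i. if i \<in> {1..k} then std_pos p q i else i) = (-1) ^ (q' - 2) * (-1) ^ (p - 1)"
    using sign_move_to[of 2 q'] sign_move_to[of 1 p] assms by (simp add: sign_compose)
  also have "\<dots> = contraction_sign p q"
  proof (cases "q < p")
    case True
    then have e: "(q' - 2) + (p - 1) + 2 = p + q" using assms unfolding q'_def by auto
    show ?thesis using True unfolding contraction_sign_def e[symmetric] power_add by simp
  next
    case False
    then have e: "(q' - 2) + (p - 1) + 3 = p + q" using assms unfolding q'_def by auto
    show ?thesis using False unfolding contraction_sign_def e[symmetric] power_add by simp
  qed
  finally show ?thesis .
qed

text \<open>The new position of the vertex at position \<open>x\<close> when the vertices at positions \<open>p\<close> and \<open>q\<close>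
  are merged into a vertex at position 1.\<close>

definition shift :: "nat \<Rightarrow> nat \<Rightarrow> nat \<Rightarrow> nat" where
  "shift p q x = x + 1 - of_bool (p < x) - of_bool (q < x)"

lemma shift_commute: "shift p q x = shift q p x"
  unfolding shift_def by (simp add: diff_commute)

lemma shift_less_iff: "x \<notin> {p, q} \<Longrightarrow> y \<notin> {p, q} \<Longrightarrow> p \<noteq> q \<Longrightarrow> shift p q x < shift p q y \<longleftrightarrow> x < y"
  unfolding shift_def by auto

lemma shift_inj: "x \<notin> {p, q} \<Longrightarrow> y \<notin> {p, q} \<Longrightarrow> p \<noteq> q \<Longrightarrow> shift p q x = shift p q y \<Longrightarrow> x = y"
  using shift_less_iff[of x p q y] shift_less_iff[of y p q x] by (metis less_irrefl linorder_neqE_nat)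

lemma shift_bounds:
  assumes "x \<notin> {p, q}" "p \<noteq> q" "1 \<le> p" "1 \<le> q" "1 \<le> x"
  shows "2 \<le> shift p q x" and "x \<le> k \<Longrightarrow> p \<le> k \<Longrightarrow> q \<le> k \<Longrightarrow> shift p q x \<le> k - 1"
  using assms unfolding shift_def by auto

lemma shift_one: "2 \<le> p \<Longrightarrow> 2 \<le> q \<Longrightarrow> shift p q 1 = 2"
  unfolding shift_def by simp

lemma minus_one_power_shift:
  assumes "x \<notin> {p, q}" "p \<noteq> q" "1 \<le> p" "1 \<le> q" "1 \<le> x"
  shows "(-1::int) ^ shift p q x = - ((-1) ^ x * (if p < x then -1 else 1) * (if q < x then -1 else 1))"
proof -
  consider "p < x" "q < x" | "p < x" "\<not> q < x" | "\<not> p < x" "q < x" | "\<not> p < x" "\<not> q < x"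
    by auto
  then show ?thesis
  proof cases
    case 1
    then have "x = Suc (shift p q x)" using assms unfolding shift_def by auto
    then have "(-1::int) ^ x = - ((-1) ^ shift p q x)" by (metis power_Suc mult_minus1)
    then show ?thesis using 1 by simp
  next
    case 4
    then have "shift p q x = Suc x" using assms unfolding shift_def by auto
    then show ?thesis using 4 by simp
  qed (use assms in \<open>auto simp: shift_def\<close>)
qed

lemma shift_shift:
  assumes "distinct [a, b, c, d, v]" "1 \<le> a" "1 \<le> b" "1 \<le> v"
  shows "shift (shift a b c) (shift a b d) (shift a b v)
    = v + 2 - of_bool (a < v) - of_bool (b < v) - of_bool (c < v) - of_bool (d < v)"
proof -
  have "shift a b c < shift a b v \<longleftrightarrow> c < v" "shift a b d < shift a b v \<longleftrightarrow> d < v"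
    using shift_less_iff[of c a b v] shift_less_iff[of d a b v] assms by auto
  then have "shift (shift a b c) (shift a b d) (shift a b v) = shift a b v + 1 - of_bool (c < v) - of_bool (d < v)"
    by (simp only: shift_def[of "shift a b c"])
  moreover have "2 \<le> shift a b v" using shift_bounds assms by auto
  ultimately show ?thesis
    unfolding shift_def[of a] by (cases "a < v"; cases "b < v"; cases "c < v"; cases "d < v") simp_all
qed

lemma shift_shift_merged:
  assumes "distinct [a, b, d, v]" "1 \<le> a" "1 \<le> b" "1 \<le> v"
  shows "shift 1 (shift a b d) (shift a b v) = v + 1 - of_bool (a < v) - of_bool (b < v) - of_bool (d < v)"
proof -
  have "shift a b d < shift a b v \<longleftrightarrow> d < v"
    using shift_less_iff[of d a b v] assms by auto
  moreover have "2 \<le> shift a b v" using shift_bounds assms by auto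
  ultimately have "shift 1 (shift a b d) (shift a b v) = shift a b v - of_bool (d < v)"
    by (simp only: shift_def[of 1]) simp
  then show ?thesis
    unfolding shift_def[of a] by (cases "a < v"; cases "b < v"; cases "d < v") simp_all
qed

lemma contraction_sign_disjoint:
  assumes "distinct [a, b, c, d]" "1 \<le> a" "1 \<le> b" "1 \<le> c" "1 \<le> d"
  shows "contraction_sign c d * contraction_sign (shift c d a) (shift c d b)
       = contraction_sign a b * contraction_sign (shift a b c) (shift a b d)"
  using assms
  by (simp add: contraction_sign_def power_add minus_one_power_shift shift_less_iff)

lemma contraction_sign_path:
  assumes "distinct [a, b, d]" "1 \<le> a" "1 \<le> b" "1 \<le> d"
  shows "contraction_sign b d * contraction_sign (shift b d a) 1
       = - (contraction_sign a b * contraction_sign 1 (shift a b d))"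
  using assms shift_bounds(1)[of a b d] shift_bounds(1)[of d a b]
  by (simp add: contraction_sign_def power_add minus_one_power_shift)

lemma contraction_sign_common_target:
  assumes "distinct [a, b, c]" "1 \<le> a" "1 \<le> b" "1 \<le> c"
  shows "contraction_sign c b * contraction_sign (shift c b a) 1
       = - (contraction_sign a b * contraction_sign (shift a b c) 1)"
  using assms shift_bounds(1)[of a c b] shift_bounds(1)[of c a b]
  by (simp add: contraction_sign_def power_add minus_one_power_shift)

lemma contraction_sign_common_source:
  assumes "distinct [a, b, d]" "1 \<le> a" "1 \<le> b" "1 \<le> d"
  shows "contraction_sign a d * contraction_sign 1 (shift a d b)
       = - (contraction_sign a b * contraction_sign 1 (shift a b d))"
  using assms shift_bounds(1)[of b a d] shift_bounds(1)[of d a b]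
  by (simp add: contraction_sign_def power_add minus_one_power_shift)

lemma is_ographD:
  assumes "is_ograph P (G, ord, src)"
  shows "finite (gV G)" "finite (gH G)" "bij_betw ord (gV G) {1..card (gV G)}" "src \<subseteq> gH G"
    and "\<And>h. h \<in> gH G \<Longrightarrow> gvert G h \<in> gV G \<and> gopp G h \<in> gH G \<and> gopp G h \<noteq> h \<and> gopp G (gopp G h) = h"
    and "\<And>h. h \<in> gH G \<Longrightarrow> h \<in> src \<longleftrightarrow> gopp G h \<notin> src"
    and "\<And>v. v \<in> gV G \<Longrightarrow> mating_wf P (hedges_at G v) (gstr G v)"
proof -
  have "is_qgraph P G" "bij_betw ord (gV G) {1..card (gV G)}" "src \<subseteq> gH G"
    "\<forall>h \<in> gH G. h \<in> src \<longleftrightarrow> gopp G h \<notin> src"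
    using assms unfolding is_ograph_def by simp_all
  then show "finite (gV G)" "finite (gH G)" "bij_betw ord (gV G) {1..card (gV G)}" "src \<subseteq> gH G"
    and "\<And>h. h \<in> gH G \<Longrightarrow> gvert G h \<in> gV G \<and> gopp G h \<in> gH G \<and> gopp G h \<noteq> h \<and> gopp G (gopp G h) = h"
    and "\<And>h. h \<in> gH G \<Longrightarrow> h \<in> src \<longleftrightarrow> gopp G h \<notin> src"
    and "\<And>v. v \<in> gV G \<Longrightarrow> mating_wf P (hedges_at G v) (gstr G v)"
    unfolding is_qgraph_def by blast+
qed

lemma source_half_edge:
  assumes "is_ograph P (G, ord, src)" "h \<in> src"
  shows "h \<in> gH G" "gopp G h \<in> gH G" "gopp G h \<notin> src" "gopp G h \<noteq> h" "gopp G (gopp G h) = h"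
    "gvert G h \<in> gV G" "gvert G (gopp G h) \<in> gV G"
    "h \<in> hedges_at G (gvert G h)" "gopp G h \<in> hedges_at G (gvert G (gopp G h))"
  using is_ographD[OF assms(1)] assms(2) unfolding hedges_at_def by blast+

lemma ord_bounds:
  assumes "is_ograph P (G, ord, src)" "v \<in> gV G"
  shows "1 \<le> ord v" "ord v \<le> card (gV G)"
  using is_ographD(3)[OF assms(1)] assms(2) bij_betwE by fastforce+

lemma ord_inj:
  assumes "is_ograph P (G, ord, src)" "v \<in> gV G" "w \<in> gV G" "v \<noteq> w"
  shows "ord v \<noteq> ord w"
  using is_ographD(3)[OF assms(1)] assms(2-4) unfolding bij_betw_def inj_on_def by blast

lemma card_ord_le:
  assumes "bij_betw ord V {1..card V}" "v \<in> V"
  shows "card {w \<in> V. ord w \<le> ord v} = ord v"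
proof -
  have "ord ` {w \<in> V. ord w \<le> ord v} = {1..ord v}"
    using assms bij_betwE[OF assms(1)] bij_betw_imp_surj_on[OF assms(1)] by fastforce
  moreover have "inj_on ord {w \<in> V. ord w \<le> ord v}"
    using bij_betw_imp_inj_on[OF assms(1)] by (rule inj_on_subset) auto
  ultimately show ?thesis using card_image by fastforce
qed

lemma ord_std_eq_std_pos:
  assumes og: "is_ograph P (G, ord, src)" and h: "h \<in> src" and v: "v \<in> gV G"
    and ab: "gvert G h \<noteq> gvert G (gopp G h)"
  shows "ord_std (G, ord, src) h v = std_pos (ord (gvert G h)) (ord (gvert G (gopp G h))) (ord v)"
proof -
  define a b where "a = gvert G h" and "b = gvert G (gopp G h)"
  have abV: "a \<in> gV G" "b \<in> gV G" using source_half_edge[OF og h] unfolding a_def b_def by auto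
  have ab': "ord a \<noteq> ord b" using ord_inj[OF og abV] ab unfolding a_def b_def by simp
  consider "v = a" | "v = b" | "v \<noteq> a" "v \<noteq> b" by auto
  then have "ord_std (G, ord, src) h v = std_pos (ord a) (ord b) (ord v)"
  proof cases
    case 3
    then have ne: "ord a \<noteq> ord v" "ord b \<noteq> ord v"
      using ord_inj[OF og] abV v by metis+
    have "{w \<in> gV G - {a, b}. ord w \<le> ord v} = {w \<in> gV G. ord w \<le> ord v} - {a, b}"
      by auto
    moreover have "{w \<in> gV G. ord w \<le> ord v} \<inter> {a, b}
        = (if ord a < ord v then {a} else {}) \<union> (if ord b < ord v then {b} else {})"
      using abV ne by auto
    ultimately have "card {w \<in> gV G - {a, b}. ord w \<le> ord v}
        = ord v - (of_bool (ord a < ord v) + of_bool (ord b < ord v))"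
      using card_Diff_subset_Int[of "{w \<in> gV G. ord w \<le> ord v}" "{a, b}"]
        card_ord_le[OF is_ographD(3)[OF og] v] ab unfolding a_def b_def by auto
    moreover have "1 \<le> ord a" "1 \<le> ord b" using ord_bounds[OF og] abV by auto
    ultimately show ?thesis
      using 3 ne unfolding ord_std_def std_pos_def a_def b_def by (auto simp: Let_def)
  qed (use ab ab' in \<open>auto simp: ord_std_def std_pos_def Let_def a_def b_def\<close>)
  then show ?thesis unfolding a_def b_def .
qed

lemma contract_sign_eq:
  assumes og: "is_ograph P (G, ord, src)" and h: "h \<in> src" and ab: "gvert G h \<noteq> gvert G (gopp G h)"
  shows "contract_sign (G, ord, src) h = contraction_sign (ord (gvert G h)) (ord (gvert G (gopp G h)))"
proof -
  define k where "k = card (gV G)"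
  have abV: "gvert G h \<in> gV G" "gvert G (gopp G h) \<in> gV G" using source_half_edge[OF og h] by auto
  have inv: "inv_into (gV G) ord i \<in> gV G \<and> ord (inv_into (gV G) ord i) = i" if "i \<in> {1..k}" for i
    using is_ographD(3)[OF og] that unfolding k_def
    by (metis bij_betw_def f_inv_into_f inv_into_into)
  have "contract_sign (G, ord, src) h
      = sign (\<lambda>i. if i \<in> {1..k} then ord_std (G, ord, src) h (inv_into (gV G) ord i) else i)"
    unfolding contract_sign_def perm_sign_def k_def by simp
  also have "\<dots> = sign (\<lambda>i. if i \<in> {1..k} then std_pos (ord (gvert G h)) (ord (gvert G (gopp G h))) i else i)"
    using ord_std_eq_std_pos[OF og h _ ab] inv by (metis (no_types, lifting))
  also have "\<dots> = contraction_sign (ord (gvert G h)) (ord (gvert G (gopp G h)))"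
    by (rule sign_std_pos) (use ord_bounds[OF og] ord_inj[OF og] abV ab k_def in auto)
  finally show ?thesis .
qed

context reversible_operad
begin

lemma contract_simps:
  "gV (fst (contract P (G, ord, src) h)) = gV G - {gvert G (gopp G h)}"
  "gH (fst (contract P (G, ord, src) h)) = gH G - {h, gopp G h}"
  "gvert (fst (contract P (G, ord, src) h))
     = (\<lambda>x. if gvert G x = gvert G (gopp G h) then gvert G h else gvert G x)"
  "gopp (fst (contract P (G, ord, src) h)) = gopp G"
  "gstr (fst (contract P (G, ord, src) h))
     = (\<lambda>v. if v = gvert G h
           then mate_contract (gstr G (gvert G h)) h (gstr G (gvert G (gopp G h))) (gopp G h)
           else gstr G v)"
  "fst (snd (contract P (G, ord, src) h)) = (\<lambda>v. if v = gvert G h then 1 else ord_std (G, ord, src) h v - 1)"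
  "snd (snd (contract P (G, ord, src) h)) = src - {h}"
  unfolding contract_def mate_contract_def by (simp_all add: Let_def)

context
  fixes G :: "('v, 'l, 'o) qgraph" and ord :: "'v \<Rightarrow> nat" and src :: "'l set" and h :: 'l
  assumes og: "is_ograph P (G, ord, src)" and h: "h \<in> src" and nonloop: "gvert G h \<noteq> gvert G (gopp G h)"
begin

lemma contract_ord_eq:
  assumes v: "v \<in> gV G" "v \<noteq> gvert G (gopp G h)"
  shows "fst (snd (contract P (G, ord, src) h)) v
    = (if v = gvert G h then 1 else shift (ord (gvert G h)) (ord (gvert G (gopp G h))) (ord v))"
proof (cases "v = gvert G h")
  case False
  have "ord v \<noteq> ord (gvert G h)" "ord v \<noteq> ord (gvert G (gopp G h))"
    using ord_inj[OF og] source_half_edge[OF og h] v False by auto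
  then show ?thesis
    using ord_std_eq_std_pos[OF og h v(1) nonloop] False
    unfolding contract_simps std_pos_def shift_def by simp
qed (simp add: contract_simps)

lemma hedges_at_contract:
  assumes "v \<noteq> gvert G (gopp G h)"
  shows "hedges_at (fst (contract P (G, ord, src) h)) v
    = (if v = gvert G h then (hedges_at G (gvert G h) - {h}) \<union> (hedges_at G (gvert G (gopp G h)) - {gopp G h})
       else hedges_at G v)"
  using assms nonloop unfolding hedges_at_def contract_simps by auto

lemma contract_half_edge:
  assumes x: "x \<in> gH (fst (contract P (G, ord, src) h))"
  defines "G1 \<equiv> fst (contract P (G, ord, src) h)"
  shows "gvert G1 x \<in> gV G1 \<and> gopp G1 x \<in> gH G1 \<and> gopp G1 x \<noteq> x \<and> gopp G1 (gopp G1 x) = x"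
proof -
  have x': "x \<in> gH G" "x \<noteq> h" "x \<noteq> gopp G h" using x unfolding contract_simps by auto
  then have fx: "gvert G x \<in> gV G" "gopp G x \<in> gH G" "gopp G x \<noteq> x" "gopp G (gopp G x) = x"
    using is_ographD(5)[OF og] by auto
  moreover have "gopp G x \<noteq> h" "gopp G x \<noteq> gopp G h"
    using fx(4) source_half_edge(5)[OF og h] x'(2,3) by auto
  ultimately show ?thesis
    using nonloop source_half_edge(6)[OF og h] unfolding G1_def contract_simps by auto
qed

lemma contract_vertex_mating:
  assumes v: "v \<in> gV (fst (contract P (G, ord, src) h))"
  defines "G1 \<equiv> fst (contract P (G, ord, src) h)"
  shows "mating_wf P (hedges_at G1 v) (gstr G1 v)"
proof (cases "v = gvert G h")
  case True
  define a b where "a = gvert G h" and "b = gvert G (gopp G h)"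
  have q: "is_mating (gstr G a)" "labels (gstr G a) = hedges_at G a"
    "is_mating (gstr G b)" "labels (gstr G b) = hedges_at G b"
    using is_ographD(7)[OF og] source_half_edge[OF og h] mating_wf_iff unfolding a_def b_def by auto
  moreover have "labels (gstr G a) \<inter> labels (gstr G b) = {}"
    using q nonloop unfolding hedges_at_def a_def b_def by auto
  moreover have "h \<in> labels (gstr G a)" "gopp G h \<in> labels (gstr G b)"
    using q source_half_edge[OF og h] unfolding a_def b_def by auto
  ultimately have "is_mating (gstr G1 a)"
    "labels (gstr G1 a) = (hedges_at G a - {h}) \<union> (hedges_at G b - {gopp G h})"
    using mate_contract_is_mating[of "gstr G a" h "gstr G b" "gopp G h"]
    unfolding G1_def contract_simps a_def b_def by auto
  moreover have "hedges_at G1 a = (hedges_at G a - {h}) \<union> (hedges_at G b - {gopp G h})"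
    using hedges_at_contract nonloop unfolding G1_def a_def b_def by simp
  ultimately show ?thesis
    using True unfolding mating_wf_iff a_def by simp
next
  case False
  have "v \<in> gV G" "v \<noteq> gvert G (gopp G h)" using v unfolding contract_simps by auto
  then show ?thesis
    using is_ographD(7)[OF og] False hedges_at_contract unfolding G1_def contract_simps by simp
qed

lemma contract_is_qgraph: "is_qgraph P (fst (contract P (G, ord, src) h))"
  using contract_half_edge contract_vertex_mating is_ographD(1,2)[OF og]
  unfolding is_qgraph_def contract_simps(1,2) by auto

lemma contract_ord_inj: "inj_on (fst (snd (contract P (G, ord, src) h))) (gV G - {gvert G (gopp G h)})"
proof (rule inj_onI)
  define a b o1 where "a = gvert G h" and "b = gvert G (gopp G h)"
    and "o1 = fst (snd (contract P (G, ord, src) h))"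
  fix v w assume vw: "v \<in> gV G - {b}" "w \<in> gV G - {b}" "o1 v = o1 w"
  have abV: "a \<in> gV G" "b \<in> gV G" using source_half_edge[OF og h] unfolding a_def b_def by auto
  have oab: "ord a \<noteq> ord b" "1 \<le> ord a" "1 \<le> ord b"
    using ord_inj[OF og abV] ord_bounds[OF og] abV nonloop unfolding a_def b_def by auto
  have o1: "o1 u = (if u = a then 1 else shift (ord a) (ord b) (ord u))" if "u \<in> gV G - {b}" for u
    using contract_ord_eq that unfolding o1_def a_def b_def by simp
  have ou: "ord u \<notin> {ord a, ord b}" "1 \<le> ord u" if "u \<in> gV G - {b}" "u \<noteq> a" for u
    using ord_inj[OF og, of u] ord_bounds[OF og, of u] abV that by auto
  have a_iff: "o1 u = 1 \<longleftrightarrow> u = a" if u: "u \<in> gV G - {b}" for u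
  proof (cases "u = a")
    case False
    then have "2 \<le> o1 u"
      using o1[OF u] ou[OF u] shift_bounds(1)[of "ord u" "ord a" "ord b"] oab by simp
    then show ?thesis using False by simp
  qed (use o1[OF u] in simp)
  show "v = w"
  proof (cases "v = a \<or> w = a")
    case True
    then show ?thesis using a_iff[OF vw(1)] a_iff[OF vw(2)] vw(3) by auto
  next
    case False
    then have "ord v = ord w"
      using vw(3) o1[OF vw(1)] o1[OF vw(2)] shift_inj[OF ou(1)[OF vw(1)] ou(1)[OF vw(2)] oab(1)] by simp
    then show ?thesis using ord_inj[OF og, of v w] vw(1,2) by auto
  qed
qed

lemma contract_ord_bij:
  "bij_betw (fst (snd (contract P (G, ord, src) h))) (gV G - {gvert G (gopp G h)})
    {1..card (gV G - {gvert G (gopp G h)})}"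
proof -
  define a b o1 V1 where "a = gvert G h" and "b = gvert G (gopp G h)"
    and "o1 = fst (snd (contract P (G, ord, src) h))" and "V1 = gV G - {b}"
  have abV: "a \<in> gV G" "b \<in> gV G" using source_half_edge[OF og h] unfolding a_def b_def by auto
  have V1: "card V1 = card (gV G) - 1" "a \<in> V1" "finite V1"
    using abV nonloop is_ographD(1)[OF og] unfolding V1_def a_def b_def by auto
  then have k: "card V1 = card (gV G) - 1" "1 \<le> card V1"
    using card_gt_0_iff[of V1] by auto
  have oab: "ord a \<noteq> ord b" "1 \<le> ord a" "1 \<le> ord b" "ord a \<le> card (gV G)" "ord b \<le> card (gV G)"
    using ord_inj[OF og abV] ord_bounds[OF og] abV nonloop unfolding a_def b_def by auto
  have "o1 v \<in> {1..card V1}" if v: "v \<in> V1" for v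
  proof (cases "v = a")
    case True
    then show ?thesis
      using contract_ord_eq[of v] v k(2) unfolding o1_def V1_def a_def b_def by simp
  next
    case False
    then have "ord v \<notin> {ord a, ord b}" "1 \<le> ord v" "ord v \<le> card (gV G)"
      using ord_inj[OF og, of v] ord_bounds[OF og, of v] abV v unfolding V1_def by auto
    then have "2 \<le> shift (ord a) (ord b) (ord v)" "shift (ord a) (ord b) (ord v) \<le> card (gV G) - 1"
      using shift_bounds[of "ord v" "ord a" "ord b"] oab by auto
    then show ?thesis
      using contract_ord_eq[of v] k(1) v False unfolding o1_def V1_def a_def b_def by simp
  qed
  then have "o1 ` V1 \<subseteq> {1..card V1}" by auto
  moreover have "card (o1 ` V1) = card {1..card V1}"
    using card_image[OF contract_ord_inj] unfolding o1_def V1_def b_def by simp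
  ultimately have "o1 ` V1 = {1..card V1}"
    by (simp add: card_subset_eq)
  then show ?thesis
    using contract_ord_inj unfolding bij_betw_def o1_def V1_def b_def by simp
qed

lemma is_ograph_contract: "is_ograph P (contract P (G, ord, src) h)"
proof -
  obtain G1 o1 s1 where c: "contract P (G, ord, src) h = (G1, o1, s1)"
    by (metis prod_cases3)
  note c_simps = contract_simps[of G ord src h, unfolded c fst_conv snd_conv]
  have "s1 \<subseteq> gH G1"
    using is_ographD(4)[OF og] source_half_edge(3)[OF og h] unfolding c_simps by auto
  moreover have "x \<in> s1 \<longleftrightarrow> gopp G1 x \<notin> s1" if x: "x \<in> gH G1" for x
  proof -
    have "x \<in> gH G" "x \<noteq> h" "x \<noteq> gopp G h" using x unfolding c_simps by auto
    then have "x \<in> gH G" "x \<noteq> h" "gopp G x \<noteq> h"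
      using is_ographD(5)[OF og] by auto
    then show ?thesis
      using is_ographD(6)[OF og, of x] unfolding c_simps by blast
  qed
  ultimately show ?thesis
    using contract_is_qgraph[unfolded c fst_conv] contract_ord_bij[unfolded c fst_conv snd_conv]
    unfolding is_ograph_def c prod.case c_simps by blast
qed

end
end

lemma relspan_sum:
  assumes "finite A" "\<And>a. a \<in> A \<Longrightarrow> f a \<in> relspan P"
  shows "(\<lambda>g. \<Sum>a\<in>A. f a g) \<in> relspan P"
  using assms
proof (induction A rule: finite_induct)
  case empty
  then show ?case using relspan.zero by simp
next
  case (insert x F)
  then have "(\<lambda>g. f x g + (\<Sum>a\<in>F. f a g)) \<in> relspan P"
    using relspan.add[of "f x" P "\<lambda>g. \<Sum>a\<in>F. f a g"] by auto
  then show ?case using insert by simp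
qed

text \<open>The sum is half the sum of the pairs; this is where rational coefficients are needed.\<close>

lemma relspan_sum_involution:
  assumes "finite A" "\<sigma> ` A \<subseteq> A" "\<And>a. a \<in> A \<Longrightarrow> \<sigma> (\<sigma> a) = a"
    and "\<And>a. a \<in> A \<Longrightarrow> (\<lambda>x. f a x + f (\<sigma> a) x) \<in> relspan P"
  shows "(\<lambda>x. \<Sum>a\<in>A. f a x) \<in> relspan P"
proof -
  have "inj_on \<sigma> A"
    by (rule inj_onI) (metis assms(3))
  moreover have "\<sigma> ` A = A"
  proof
    show "A \<subseteq> \<sigma> ` A"
      using assms(2,3) by (metis image_eqI image_subset_iff subsetI)
  qed (rule assms(2))
  ultimately have "(\<Sum>a\<in>A. f (\<sigma> a) x) = (\<Sum>a\<in>A. f a x)" for x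
    using sum.reindex[of \<sigma> A "\<lambda>a. f a x"] by simp
  then have eq: "(\<lambda>x. \<Sum>a\<in>A. f a x) = (\<lambda>x. (1/2) * (\<Sum>a\<in>A. f a x + f (\<sigma> a) x))"
    by (simp add: sum.distrib)
  have "(\<lambda>x. \<Sum>a\<in>A. f a x + f (\<sigma> a) x) \<in> relspan P"
    using relspan_sum[OF assms(1), of "\<lambda>a x. f a x + f (\<sigma> a) x"] assms(4) by blast
  then have "(\<lambda>x. (1/2) * (\<Sum>a\<in>A. f a x + f (\<sigma> a) x)) \<in> relspan P"
    by (rule relspan.smult)
  then show ?thesis unfolding eq .
qed

lemma dE_ind: "dE P (ind g) = dE_gen P g"
proof -
  have "{x. ind g x \<noteq> 0} = {g}" unfolding ind_def by auto
  then show ?thesis unfolding dE_def by (simp add: ind_def)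
qed

lemma dE_gen_eq:
  "dE_gen P (G, ord, src) = (\<lambda>g'. \<Sum>h\<in>{h \<in> src. gvert G h \<noteq> gvert G (gopp G h)}.
      of_int (contract_sign (G, ord, src) h) * ind (contract P (G, ord, src) h) g')"
  unfolding dE_gen_def ind_def by (auto intro!: sum.cong)

lemma dE_sum_ind:
  assumes "finite A"
  shows "dE P (\<lambda>x. \<Sum>a\<in>A. c a * ind (g a) x) = (\<lambda>x. \<Sum>a\<in>A. c a * dE_gen P (g a) x)"
proof
  fix x
  define X where "X = (\<lambda>y. \<Sum>a\<in>A. c a * ind (g a) y)"
  have "{y. X y \<noteq> 0} \<subseteq> g ` A"
  proof
    fix y assume "y \<in> {y. X y \<noteq> 0}"
    then obtain a where "a \<in> A" "c a * ind (g a) y \<noteq> 0"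
      unfolding X_def by (metis (mono_tags, lifting) mem_Collect_eq sum.neutral)
    then show "y \<in> g ` A" unfolding ind_def by (auto split: if_splits)
  qed
  then have "dE P X x = (\<Sum>y\<in>g ` A. X y * dE_gen P y x)"
    unfolding dE_def by (intro sum.mono_neutral_left) (use assms in auto)
  also have "\<dots> = (\<Sum>a\<in>A. \<Sum>y\<in>g ` A. c a * (ind (g a) y * dE_gen P y x))"
    unfolding X_def by (simp add: sum_distrib_right sum.swap[of _ "g ` A"] mult.assoc)
  also have "\<dots> = (\<Sum>a\<in>A. c a * dE_gen P (g a) x)"
  proof (rule sum.cong[OF refl])
    fix a assume a: "a \<in> A"
    have "(\<Sum>y\<in>g ` A. c a * (ind (g a) y * dE_gen P y x))
        = c a * (\<Sum>y\<in>g ` A. if y = g a then dE_gen P y x else 0)"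
      unfolding sum_distrib_left ind_def by (auto intro!: sum.cong)
    then show "(\<Sum>y\<in>g ` A. c a * (ind (g a) y * dE_gen P y x)) = c a * dE_gen P (g a) x"
      using a assms by (simp add: sum.delta)
  qed
  finally show "dE P (\<lambda>x. \<Sum>a\<in>A. c a * ind (g a) x) x = (\<Sum>a\<in>A. c a * dE_gen P (g a) x)"
    unfolding X_def .
qed

lemma inv_into_ord:
  assumes "bij_betw ord V {1..k}" "i \<in> {1..k}"
  shows "inv_into V ord i \<in> V" "ord (inv_into V ord i) = i"
  using bij_betw_inv_into_right[OF assms] bij_betwE[OF bij_betw_inv_into[OF assms(1)]] assms(2)
  by auto

lemma perm_sign_id_on:
  assumes "bij_betw ord V {1..k}" "\<And>v. v \<in> V \<Longrightarrow> f v = ord v"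
  shows "perm_sign k (\<lambda>i. f (inv_into V ord i)) = 1"
proof -
  have "(\<lambda>i. if i \<in> {1..k} then f (inv_into V ord i) else i) = id"
  proof
    fix i show "(if i \<in> {1..k} then f (inv_into V ord i) else i) = id i"
      using inv_into_ord[OF assms(1), of i] assms(2) by auto
  qed
  then show ?thesis unfolding perm_sign_def by simp
qed

lemma perm_sign_swap_first_two:
  assumes "bij_betw ord V {1..k}" "2 \<le> k" "\<And>v. v \<in> V \<Longrightarrow> f v = transpose 1 2 (ord v)"
  shows "perm_sign k (\<lambda>i. f (inv_into V ord i)) = -1"
proof -
  have "(\<lambda>i. if i \<in> {1..k} then f (inv_into V ord i) else i) = transpose 1 2"
  proof
    fix i :: nat show "(if i \<in> {1..k} then f (inv_into V ord i) else i) = transpose 1 2 i"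
      using inv_into_ord[OF assms(1), of i] assms(2,3) by (auto simp: transpose_def)
  qed
  then show ?thesis unfolding perm_sign_def by (simp add: sign_swap_id)
qed

context reversible_operad
begin

lemma mate_relab_id: "is_mating q \<Longrightarrow> mate_relab P id q = q"
  unfolding mate_relab_def is_mating_def using relab_id_on by (simp add: prod_eq_iff)

lemma oiso_id_half_edges:
  assumes ogA: "is_ograph P (GA, oA, sA)" and bij: "bij_betw \<phi> (gV GA) (gV GB)"
    and H: "gH GB = gH GA" and s: "sB = sA"
    and vert: "\<forall>x \<in> gH GA. gvert GB x = \<phi> (gvert GA x)" and opp: "\<forall>x \<in> gH GA. gopp GB x = gopp GA x"
    and str: "\<forall>v \<in> gV GA. mate_eq P (gstr GA v) (gstr GB (\<phi> v))"
  shows "oiso P (GA, oA, sA) (GB, oB, sB) \<phi> id (perm_sign (card (gV GA)) (\<lambda>i. oB (\<phi> (inv_into (gV GA) oA i))))"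
proof -
  have "mate_relab P id (gstr GA v) = gstr GA v" if "v \<in> gV GA" for v
    using mate_relab_id is_ographD(7)[OF ogA that] mating_wf_iff by blast
  then show ?thesis
    unfolding oiso_def using bij H s vert opp str by simp
qed

lemma relspan_iso_pair:
  assumes ogA: "is_ograph P (GA, oA, sA)" and ogB: "is_ograph P (GB, oB, sB)"
    and bij: "bij_betw \<phi> (gV GA) (gV GB)" and H: "gH GB = gH GA" and s: "sB = sA"
    and vert: "\<forall>x \<in> gH GA. gvert GB x = \<phi> (gvert GA x)" and opp: "\<forall>x \<in> gH GA. gopp GB x = gopp GA x"
    and str: "\<forall>v \<in> gV GA. mate_eq P (gstr GA v) (gstr GB (\<phi> v))"
    and ord: "((\<forall>v\<in>gV GA. oB (\<phi> v) = oA v) \<and> t = - u)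
      \<or> (2 \<le> card (gV GA) \<and> (\<forall>v\<in>gV GA. oB (\<phi> v) = transpose 1 2 (oA v)) \<and> t = u)"
  shows "(\<lambda>x. of_int u * ind (GA, oA, sA) x + of_int t * ind (GB, oB, sB) x) \<in> relspan P"
proof -
  define eps where "eps = perm_sign (card (gV GA)) (\<lambda>i. oB (\<phi> (inv_into (gV GA) oA i)))"
  have "(eps = 1 \<and> t = - u) \<or> (eps = -1 \<and> t = u)"
    using ord perm_sign_id_on[OF is_ographD(3)[OF ogA], of "oB \<circ> \<phi>"]
      perm_sign_swap_first_two[OF is_ographD(3)[OF ogA], of "oB \<circ> \<phi>"]
    unfolding eps_def by auto
  moreover have "(\<lambda>x. ind (GA, oA, sA) x - of_int eps * ind (GB, oB, sB) x) \<in> relspan P"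
    using relspan.gen[OF ogA ogB oiso_id_half_edges[OF ogA bij H s vert opp str]] unfolding eps_def .
  then have "(\<lambda>x. of_int u * (ind (GA, oA, sA) x - of_int eps * ind (GB, oB, sB) x)) \<in> relspan P"
    by (rule relspan.smult)
  ultimately show ?thesis
    by (auto simp: algebra_simps)
qed

end

lemma merge_distinct_iff:
  "a \<noteq> b \<Longrightarrow> (if c = b then a else c) \<noteq> (if d = b then a else d) \<longleftrightarrow> c \<noteq> d \<and> {a, b} \<noteq> {c, d}"
  by (auto simp: doubleton_eq_iff)

locale edge_pair = reversible_operad P for P :: "('l, 'o) opd" +
  fixes G :: "('v, 'l, 'o) qgraph" and ord :: "'v \<Rightarrow> nat" and src :: "'l set" and h1 h2 :: 'l
  assumes og: "is_ograph P (G, ord, src)" and h1: "h1 \<in> src" and h2: "h2 \<in> src" and h1_ne_h2: "h1 \<noteq> h2"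
    and nonloop1: "gvert G h1 \<noteq> gvert G (gopp G h1)" and nonloop2: "gvert G h2 \<noteq> gvert G (gopp G h2)"
    and not_parallel: "{gvert G h1, gvert G (gopp G h1)} \<noteq> {gvert G h2, gvert G (gopp G h2)}"
begin

abbreviation "a \<equiv> gvert G h1"
abbreviation "b \<equiv> gvert G (gopp G h1)"
abbreviation "c \<equiv> gvert G h2"
abbreviation "d \<equiv> gvert G (gopp G h2)"

abbreviation merge1 :: "'v \<Rightarrow> 'v" where "merge1 v \<equiv> if v = b then a else v"
abbreviation merge2 :: "'v \<Rightarrow> 'v" where "merge2 v \<equiv> if v = merge1 d then merge1 c else v"
abbreviation str1 :: "'v \<Rightarrow> 'o \<times> 'o" where
  "str1 v \<equiv> if v = a then mate_contract (gstr G a) h1 (gstr G b) (gopp G h1) else gstr G v"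
abbreviation ord1 :: "'v \<Rightarrow> nat" where "ord1 v \<equiv> if v = a then 1 else shift (ord a) (ord b) (ord v)"

abbreviation "C1 \<equiv> contract P (G, ord, src) h1"
abbreviation "A \<equiv> contract P C1 h2"
abbreviation "sign_A \<equiv> contract_sign (G, ord, src) h1 * contract_sign C1 h2"

lemma edge_pair_swap: "edge_pair P G ord src h2 h1"
  using edge_pair_axioms unfolding edge_pair_def edge_pair_axioms_def by (auto simp: insert_commute)

lemma vertices: "a \<in> gV G" "b \<in> gV G" "c \<in> gV G" "d \<in> gV G"
  using source_half_edge[OF og h1] source_half_edge[OF og h2] by auto

lemma merged_second_edge: "merge1 c \<noteq> merge1 d"
  using merge_distinct_iff[OF nonloop1] nonloop2 not_parallel by simp

lemma second_edge_in_C1: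
  "is_ograph P C1" "h2 \<in> snd (snd C1)"
  "gvert (fst C1) h2 = merge1 c" "gvert (fst C1) (gopp (fst C1) h2) = merge1 d"
  using is_ograph_contract[OF og h1 nonloop1] h2 h1_ne_h2 unfolding contract_simps by auto

lemma ord_C1: "v \<in> gV G \<Longrightarrow> v \<noteq> b \<Longrightarrow> fst (snd C1) v = ord1 v"
  using contract_ord_eq[OF og h1 nonloop1] by simp

lemma is_ograph_A: "is_ograph P A"
proof -
  obtain G1 o1 s1 where "C1 = (G1, o1, s1)" by (metis prod_cases3)
  then show ?thesis
    using is_ograph_contract[of G1 o1 s1 h2] second_edge_in_C1 merged_second_edge by simp
qed

lemma A_simps:
  "gV (fst A) = gV G - {b} - {merge1 d}"
  "gH (fst A) = gH G - {h1, gopp G h1} - {h2, gopp G h2}"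
  "gvert (fst A) = (\<lambda>x. merge2 (merge1 (gvert G x)))"
  "gopp (fst A) = gopp G"
  "gstr (fst A) = (\<lambda>v. if v = merge1 c then mate_contract (str1 (merge1 c)) h2 (str1 (merge1 d)) (gopp G h2)
                        else str1 v)"
  "snd (snd A) = src - {h1} - {h2}"
proof -
  obtain G1 o1 s1 where C1: "C1 = (G1, o1, s1)" by (metis prod_cases3)
  note s1 = contract_simps[of G ord src h1, unfolded C1 fst_conv snd_conv]
  show "gV (fst A) = gV G - {b} - {merge1 d}"
    "gH (fst A) = gH G - {h1, gopp G h1} - {h2, gopp G h2}"
    "gvert (fst A) = (\<lambda>x. merge2 (merge1 (gvert G x)))"
    "gopp (fst A) = gopp G"
    "gstr (fst A) = (\<lambda>v. if v = merge1 c then mate_contract (str1 (merge1 c)) h2 (str1 (merge1 d)) (gopp G h2)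
                        else str1 v)"
    "snd (snd A) = src - {h1} - {h2}"
    unfolding C1 contract_simps s1 by simp_all
qed

lemma ord_A:
  assumes "v \<in> gV (fst A)"
  shows "fst (snd A) v = (if v = merge1 c then 1 else shift (ord1 (merge1 c)) (ord1 (merge1 d)) (ord1 v))"
proof -
  obtain G1 o1 s1 where C1: "C1 = (G1, o1, s1)" by (metis prod_cases3)
  have V: "merge1 c \<in> gV G" "merge1 c \<noteq> b" "merge1 d \<in> gV G" "merge1 d \<noteq> b"
    "v \<in> gV G" "v \<noteq> b" "v \<noteq> merge1 d"
    using vertices assms nonloop1 unfolding A_simps by auto
  have "v \<in> gV G1" using V unfolding contract_simps[of G ord src h1, unfolded C1 fst_conv] by simp
  then have "fst (snd A) v = (if v = merge1 c then 1 else shift (o1 (merge1 c)) (o1 (merge1 d)) (o1 v))"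
    using contract_ord_eq[of G1 o1 s1 h2 v] second_edge_in_C1 merged_second_edge V(7) unfolding C1 by simp
  moreover have "o1 x = ord1 x" if "x \<in> gV G" "x \<noteq> b" for x
    using ord_C1[OF that] unfolding C1 by simp
  ultimately show ?thesis
    using V by simp
qed

lemma sign_A_eq: "sign_A = contraction_sign (ord a) (ord b) * contraction_sign (ord1 (merge1 c)) (ord1 (merge1 d))"
proof -
  obtain G1 o1 s1 where C1: "C1 = (G1, o1, s1)" by (metis prod_cases3)
  have "merge1 c \<in> gV G" "merge1 c \<noteq> b" "merge1 d \<in> gV G" "merge1 d \<noteq> b"
    using vertices nonloop1 by auto
  moreover have "o1 x = ord1 x" if "x \<in> gV G" "x \<noteq> b" for x
    using ord_C1[OF that] unfolding C1 by simp
  ultimately show ?thesis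
    using contract_sign_eq[OF og h1 nonloop1] contract_sign_eq[where G=G1 and ord=o1 and src=s1 and h=h2]
      second_edge_in_C1 merged_second_edge unfolding C1 by simp
qed

abbreviation "B \<equiv> contract P (contract P (G, ord, src) h2) h1"
abbreviation "sign_B \<equiv> contract_sign (G, ord, src) h2 * contract_sign (contract P (G, ord, src) h2) h1"

lemmas is_ograph_B = edge_pair.is_ograph_A[OF edge_pair_swap]
lemmas B_simps = edge_pair.A_simps[OF edge_pair_swap]
lemmas ord_B = edge_pair.ord_A[OF edge_pair_swap]
lemmas sign_B_eq = edge_pair.sign_A_eq[OF edge_pair_swap]

lemma vertex_matings:
  "v \<in> gV G \<Longrightarrow> is_mating (gstr G v)" "v \<in> gV G \<Longrightarrow> labels (gstr G v) = hedges_at G v"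
  using is_ographD(7)[OF og] mating_wf_iff by blast+

lemma half_edges_at:
  "h1 \<in> hedges_at G a" "gopp G h1 \<in> hedges_at G b" "h2 \<in> hedges_at G c" "gopp G h2 \<in> hedges_at G d"
  "gopp G h1 \<noteq> h2" "gopp G h2 \<noteq> h1" "gopp G h1 \<noteq> gopp G h2"
  using source_half_edge[OF og h1] source_half_edge[OF og h2] h1 h2 h1_ne_h2 by metis+

lemma hedges_at_disjoint: "v \<noteq> w \<Longrightarrow> hedges_at G v \<inter> hedges_at G w = {}"
  unfolding hedges_at_def by auto

lemma vertex_matings_disjoint:
  assumes "v \<in> gV G" "w \<in> gV G" "v \<noteq> w"
  shows "is_mating (gstr G v)" "is_mating (gstr G w)" "labels (gstr G v) \<inter> labels (gstr G w) = {}"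
  using vertex_matings hedges_at_disjoint assms by auto

lemma ord_vertex: "v \<in> gV G \<Longrightarrow> 1 \<le> ord v" "v \<in> gV G \<Longrightarrow> w \<in> gV G \<Longrightarrow> v \<noteq> w \<Longrightarrow> ord v \<noteq> ord w"
  using ord_bounds[OF og] ord_inj[OF og] by auto

lemma pair_relspan_by:
  assumes "bij_betw \<phi> (gV (fst A)) (gV (fst B))"
    and "\<forall>x \<in> gH (fst A). gvert (fst B) x = \<phi> (gvert (fst A) x)"
    and "\<forall>v \<in> gV (fst A). mate_eq P (gstr (fst A) v) (gstr (fst B) (\<phi> v))"
    and "((\<forall>v \<in> gV (fst A). fst (snd B) (\<phi> v) = fst (snd A) v) \<and> sign_B = - sign_A)
      \<or> (2 \<le> card (gV (fst A)) \<and> (\<forall>v \<in> gV (fst A). fst (snd B) (\<phi> v) = transpose 1 2 (fst (snd A) v))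
         \<and> sign_B = sign_A)"
  shows "(\<lambda>x. of_int sign_A * ind A x + of_int sign_B * ind B x) \<in> relspan P"
proof -
  have ogA: "is_ograph P (fst A, fst (snd A), snd (snd A))" and ogB: "is_ograph P (fst B, fst (snd B), snd (snd B))"
    using is_ograph_A is_ograph_B by simp_all
  have "gH (fst B) = gH (fst A)" "snd (snd B) = snd (snd A)" "\<forall>x \<in> gH (fst A). gopp (fst B) x = gopp (fst A) x"
    unfolding A_simps B_simps by auto
  then have "(\<lambda>x. of_int sign_A * ind (fst A, fst (snd A), snd (snd A)) x
      + of_int sign_B * ind (fst B, fst (snd B), snd (snd B)) x) \<in> relspan P"
    using relspan_iso_pair[OF ogA ogB assms(1)] assms(2-4) by blast
  then show ?thesis by simp
qed

lemma path_structures: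
  assumes "c = b"
  shows "\<forall>v \<in> gV (fst A). mate_eq P (gstr (fst A) v) (gstr (fst B) v)"
proof
  fix v assume v: "v \<in> gV (fst A)"
  have abd: "a \<noteq> b" "a \<noteq> d" "b \<noteq> d"
    using assms nonloop1 nonloop2 not_parallel by (auto simp: insert_commute)
  show "mate_eq P (gstr (fst A) v) (gstr (fst B) v)"
  proof (cases "v = a")
    case True
    have "mate_eq P (mate_contract (mate_contract (gstr G a) h1 (gstr G b) (gopp G h1)) h2 (gstr G d) (gopp G h2))
        (mate_contract (gstr G a) h1 (mate_contract (gstr G b) h2 (gstr G d) (gopp G h2)) (gopp G h1))"
      using mate_contract_assoc vertex_matings vertices half_edges_at hedges_at_disjoint abd assms
      by (simp add: Int_commute)
    then show ?thesis
      using True abd assms unfolding A_simps B_simps by simp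
  next
    case False
    then show ?thesis
      using v abd assms mate_eq_refl unfolding A_simps B_simps by simp
  qed
qed

lemma path_relspan:
  assumes "c = b"
  shows "(\<lambda>x. of_int sign_A * ind A x + of_int sign_B * ind B x) \<in> relspan P"
proof (rule pair_relspan_by[of id])
  have abd: "a \<noteq> b" "a \<noteq> d" "b \<noteq> d"
    using assms nonloop1 nonloop2 not_parallel by (auto simp: insert_commute)
  have V: "gV (fst A) = gV G - {b} - {d}" "gV (fst B) = gV G - {b} - {d}"
    using abd assms unfolding A_simps B_simps by auto
  then show "bij_betw id (gV (fst A)) (gV (fst B))" by simp
  show "\<forall>x \<in> gH (fst A). gvert (fst B) x = id (gvert (fst A) x)"
    using abd assms unfolding A_simps B_simps by auto
  show "\<forall>v \<in> gV (fst A). mate_eq P (gstr (fst A) v) (gstr (fst B) (id v))"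
    using path_structures[OF assms] by simp
  have o: "distinct [ord a, ord b, ord d]" "1 \<le> ord a" "1 \<le> ord b" "1 \<le> ord d"
    using ord_vertex vertices abd by auto
  have "fst (snd B) v = fst (snd A) v" if v: "v \<in> gV (fst A)" for v
  proof (cases "v = a")
    case False
    then have "distinct [ord a, ord b, ord d, ord v]" "1 \<le> ord v"
      using o ord_vertex v V vertices by auto
    then show ?thesis
      using ord_A[OF v] ord_B v V False abd assms o shift_shift_merged shift_commute by simp
  qed (use ord_A ord_B v V abd assms in simp)
  moreover have "sign_B = - sign_A"
    using sign_A_eq sign_B_eq contraction_sign_path[OF o] abd assms by simp
  ultimately show "((\<forall>v \<in> gV (fst A). fst (snd B) (id v) = fst (snd A) v) \<and> sign_B = - sign_A)
      \<or> (2 \<le> card (gV (fst A)) \<and> (\<forall>v \<in> gV (fst A). fst (snd B) (id v) = transpose 1 2 (fst (snd A) v))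
         \<and> sign_B = sign_A)"
    by simp
qed

lemma common_source_structures:
  assumes "c = a"
  shows "\<forall>v \<in> gV (fst A). mate_eq P (gstr (fst A) v) (gstr (fst B) v)"
proof
  fix v assume v: "v \<in> gV (fst A)"
  have abd: "a \<noteq> b" "a \<noteq> d" "b \<noteq> d"
    using assms nonloop1 nonloop2 not_parallel by (auto simp: insert_commute)
  note q = vertex_matings vertices half_edges_at hedges_at_disjoint abd assms
  show "mate_eq P (gstr (fst A) v) (gstr (fst B) v)"
  proof (cases "v = a")
    case True
    let ?ab = "mate_contract (gstr G a) h1 (gstr G b) (gopp G h1)"
    let ?ba = "mate_contract (gstr G b) (gopp G h1) (gstr G a) h1"
    let ?ad = "mate_contract (gstr G a) h2 (gstr G d) (gopp G h2)"
    note ab = vertex_matings_disjoint[of a b] and ad = vertex_matings_disjoint[of a d]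
      and bd = vertex_matings_disjoint[of b d]
    have lab: "h1 \<in> labels (gstr G a)" "gopp G h1 \<in> labels (gstr G b)"
      "h2 \<in> labels (gstr G a)" "gopp G h2 \<in> labels (gstr G d)"
      using vertex_matings vertices half_edges_at assms by auto
    have "mate_contract ?ab h2 (gstr G d) (gopp G h2) = mate_contract ?ba h2 (gstr G d) (gopp G h2)"
      by (rule mate_contract_cong_left[OF mate_contract_commute])
        (use ab vertices abd lab mate_contract_is_mating h1_ne_h2 in auto)
    also have "mate_eq P \<dots> (mate_contract (gstr G b) (gopp G h1) ?ad h1)"
      by (rule mate_contract_assoc) (use ab ad bd vertices abd lab h1_ne_h2 in \<open>auto simp: Int_commute\<close>)
    moreover have "mate_eq P (mate_contract (gstr G b) (gopp G h1) ?ad h1) (mate_contract ?ad h1 (gstr G b) (gopp G h1))"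
      by (rule mate_contract_commute)
        (use ab ad bd vertices abd lab h1_ne_h2 mate_contract_is_mating[of "gstr G a" h2 "gstr G d" "gopp G h2"]
         in \<open>auto simp: Int_commute\<close>)
    ultimately show ?thesis
      using True mate_eq_trans abd assms unfolding A_simps B_simps by simp
  next
    case False
    then show ?thesis
      using v abd assms mate_eq_refl unfolding A_simps B_simps by simp
  qed
qed

lemma common_source_relspan:
  assumes "c = a"
  shows "(\<lambda>x. of_int sign_A * ind A x + of_int sign_B * ind B x) \<in> relspan P"
proof (rule pair_relspan_by[of id])
  have abd: "a \<noteq> b" "a \<noteq> d" "b \<noteq> d"
    using assms nonloop1 nonloop2 not_parallel by (auto simp: insert_commute)
  have V: "gV (fst A) = gV G - {b} - {d}" "gV (fst B) = gV G - {b} - {d}"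
    using abd assms unfolding A_simps B_simps by auto
  then show "bij_betw id (gV (fst A)) (gV (fst B))" by simp
  show "\<forall>x \<in> gH (fst A). gvert (fst B) x = id (gvert (fst A) x)"
    using abd assms unfolding A_simps B_simps by auto
  show "\<forall>v \<in> gV (fst A). mate_eq P (gstr (fst A) v) (gstr (fst B) (id v))"
    using common_source_structures[OF assms] by simp
  have o: "distinct [ord a, ord b, ord d]" "1 \<le> ord a" "1 \<le> ord b" "1 \<le> ord d"
    using ord_vertex vertices abd by auto
  have "fst (snd B) v = fst (snd A) v" if v: "v \<in> gV (fst A)" for v
  proof (cases "v = a")
    case False
    then have "distinct [ord a, ord b, ord d, ord v]" "1 \<le> ord v"
      using o ord_vertex v V vertices by auto
    then show ?thesis
      using ord_A[OF v] ord_B v V False abd assms o shift_shift_merged by (simp add: diff_commute)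
  qed (use ord_A ord_B v V abd assms in simp)
  moreover have "sign_B = - sign_A"
    using sign_A_eq sign_B_eq contraction_sign_common_source[OF o] abd assms by simp
  ultimately show "((\<forall>v \<in> gV (fst A). fst (snd B) (id v) = fst (snd A) v) \<and> sign_B = - sign_A)
      \<or> (2 \<le> card (gV (fst A)) \<and> (\<forall>v \<in> gV (fst A). fst (snd B) (id v) = transpose 1 2 (fst (snd A) v))
         \<and> sign_B = sign_A)"
    by simp
qed

lemma common_target_structures:
  assumes "d = b"
  shows "\<forall>v \<in> gV (fst A). mate_eq P (gstr (fst A) v) (gstr (fst B) ((id(c := a)) v))"
proof
  fix v assume v: "v \<in> gV (fst A)"
  have abc: "a \<noteq> b" "a \<noteq> c" "b \<noteq> c"
    using assms nonloop1 nonloop2 not_parallel by (auto simp: insert_commute)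
  note q = vertex_matings vertices half_edges_at hedges_at_disjoint abc assms
  show "mate_eq P (gstr (fst A) v) (gstr (fst B) ((id(c := a)) v))"
  proof (cases "v = c")
    case True
    let ?ab = "mate_contract (gstr G a) h1 (gstr G b) (gopp G h1)"
    let ?bc = "mate_contract (gstr G b) (gopp G h2) (gstr G c) h2"
    let ?cb = "mate_contract (gstr G c) h2 (gstr G b) (gopp G h2)"
    note ab = vertex_matings_disjoint[of a b] and ac = vertex_matings_disjoint[of a c]
      and bc = vertex_matings_disjoint[of b c] and cb = vertex_matings_disjoint[of c b]
    have lab: "h1 \<in> labels (gstr G a)" "gopp G h1 \<in> labels (gstr G b)"
      "h2 \<in> labels (gstr G c)" "gopp G h2 \<in> labels (gstr G b)"
      using vertex_matings vertices half_edges_at assms by auto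
    have "mate_eq P (mate_contract (gstr G c) h2 ?ab (gopp G h2)) (mate_contract ?ab (gopp G h2) (gstr G c) h2)"
      by (rule mate_contract_commute)
        (use ab ac bc vertices abc lab half_edges_at mate_contract_is_mating[of "gstr G a" h1 "gstr G b" "gopp G h1"]
         in \<open>auto simp: Int_commute\<close>)
    moreover have "mate_eq P (mate_contract ?ab (gopp G h2) (gstr G c) h2) (mate_contract (gstr G a) h1 ?bc (gopp G h1))"
      by (rule mate_contract_assoc) (use ab ac bc vertices abc lab half_edges_at in \<open>auto simp: Int_commute\<close>)
    moreover have "mate_contract (gstr G a) h1 ?bc (gopp G h1) = mate_contract (gstr G a) h1 ?cb (gopp G h1)"
      by (rule mate_contract_cong_right[OF mate_contract_commute])
        (use bc vertices abc lab half_edges_at mate_contract_is_mating in auto)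
    ultimately show ?thesis
      using True mate_eq_trans abc assms unfolding A_simps B_simps by simp
  next
    case False
    then show ?thesis
      using v abc assms mate_eq_refl unfolding A_simps B_simps by simp
  qed
qed

lemma common_target_relspan:
  assumes "d = b"
  shows "(\<lambda>x. of_int sign_A * ind A x + of_int sign_B * ind B x) \<in> relspan P"
proof (rule pair_relspan_by[of "id(c := a)"])
  have abc: "a \<noteq> b" "a \<noteq> c" "b \<noteq> c"
    using assms nonloop1 nonloop2 not_parallel by (auto simp: insert_commute)
  have V: "gV (fst A) = gV G - {b} - {a}" "gV (fst B) = gV G - {b} - {c}"
    using abc assms unfolding A_simps B_simps by auto
  then show "bij_betw (id(c := a)) (gV (fst A)) (gV (fst B))"
    using vertices abc unfolding bij_betw_def inj_on_def by (auto simp: image_def)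
  show "\<forall>x \<in> gH (fst A). gvert (fst B) x = (id(c := a)) (gvert (fst A) x)"
    using abc assms unfolding A_simps B_simps by auto
  show "\<forall>v \<in> gV (fst A). mate_eq P (gstr (fst A) v) (gstr (fst B) ((id(c := a)) v))"
    using common_target_structures[OF assms] by simp
  have o: "distinct [ord a, ord b, ord c]" "1 \<le> ord a" "1 \<le> ord b" "1 \<le> ord c"
    using ord_vertex vertices abc by auto
  have "fst (snd B) ((id(c := a)) v) = fst (snd A) v" if v: "v \<in> gV (fst A)" for v
  proof (cases "v = c")
    case False
    then have "distinct [ord a, ord b, ord c, ord v]" "1 \<le> ord v"
      using o ord_vertex v V vertices by auto
    then show ?thesis
      using ord_A[OF v] ord_B[of v] v V False abc assms o shift_shift_merged shift_commute
      by (simp add: diff_commute)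
  qed (use ord_A ord_B v V abc assms vertices in simp)
  moreover have "sign_B = - sign_A"
    using sign_A_eq sign_B_eq contraction_sign_common_target[OF o] abc assms by simp
  ultimately show "((\<forall>v \<in> gV (fst A). fst (snd B) ((id(c := a)) v) = fst (snd A) v) \<and> sign_B = - sign_A)
      \<or> (2 \<le> card (gV (fst A)) \<and> (\<forall>v \<in> gV (fst A). fst (snd B) ((id(c := a)) v) = transpose 1 2 (fst (snd A) v))
         \<and> sign_B = sign_A)"
    by simp
qed

context
  assumes disjoint: "a \<noteq> c" "a \<noteq> d" "b \<noteq> c" "b \<noteq> d"
begin

lemma disjoint_vertices:
  "gV (fst A) = gV G - {b} - {d}" "gV (fst B) = gV G - {b} - {d}" "a \<in> gV (fst A)" "c \<in> gV (fst A)"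
  using nonloop1 nonloop2 disjoint vertices unfolding A_simps B_simps by auto

lemma disjoint_ord_bounds:
  "distinct [ord a, ord b, ord c, ord d]" "1 \<le> ord a" "1 \<le> ord b" "1 \<le> ord c" "1 \<le> ord d"
  using ord_vertex vertices nonloop1 nonloop2 disjoint by auto

lemma disjoint_first_two: "fst (snd A) c = 1" "fst (snd A) a = 2" "fst (snd B) a = 1" "fst (snd B) c = 2"
proof -
  note o = disjoint_ord_bounds
  have "2 \<le> shift (ord a) (ord b) (ord c)" "2 \<le> shift (ord a) (ord b) (ord d)"
    "2 \<le> shift (ord c) (ord d) (ord a)" "2 \<le> shift (ord c) (ord d) (ord b)"
    using shift_bounds(1) o by auto
  then show "fst (snd A) c = 1" "fst (snd A) a = 2" "fst (snd B) a = 1" "fst (snd B) c = 2"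
    using ord_A ord_B disjoint_vertices disjoint shift_one by auto
qed

lemma disjoint_orders:
  assumes v: "v \<in> gV (fst A)"
  shows "fst (snd B) v = transpose 1 2 (fst (snd A) v)"
proof (cases "v = a \<or> v = c")
  case False
  note o = disjoint_ord_bounds
  have ov: "distinct [ord a, ord b, ord c, ord d, ord v]" "distinct [ord c, ord d, ord a, ord b, ord v]" "1 \<le> ord v"
    using o ord_vertex v disjoint_vertices vertices False by auto
  have "fst (snd A) v = shift (shift (ord a) (ord b) (ord c)) (shift (ord a) (ord b) (ord d)) (shift (ord a) (ord b) (ord v))"
    using ord_A[OF v] v disjoint_vertices False disjoint by simp
  also have "\<dots> = ord v + 2 - of_bool (ord a < ord v) - of_bool (ord b < ord v)
      - of_bool (ord c < ord v) - of_bool (ord d < ord v)"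
    by (rule shift_shift[OF ov(1) o(2,3) ov(3)])
  also have "\<dots> = ord v + 2 - of_bool (ord c < ord v) - of_bool (ord d < ord v)
      - of_bool (ord a < ord v) - of_bool (ord b < ord v)"
    by (simp only: diff_diff_left ac_simps)
  also have "\<dots> = shift (shift (ord c) (ord d) (ord a)) (shift (ord c) (ord d) (ord b)) (shift (ord c) (ord d) (ord v))"
    by (rule shift_shift[OF ov(2) o(4,5) ov(3), symmetric])
  also have "\<dots> = fst (snd B) v"
    using ord_B[of v] v disjoint_vertices False disjoint by simp
  finally have "fst (snd B) v = fst (snd A) v" ..
  moreover have "fst (snd A) v \<noteq> 1" "fst (snd A) v \<noteq> 2"
  proof -
    have "is_ograph P (fst A, fst (snd A), snd (snd A))"
      using is_ograph_A by simp
    then have "inj_on (fst (snd A)) (gV (fst A))"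
      using is_ographD(3) bij_betw_imp_inj_on by blast
    then have "fst (snd A) v \<noteq> fst (snd A) c" "fst (snd A) v \<noteq> fst (snd A) a"
      using v disjoint_vertices False by (metis inj_onD)+
    then show "fst (snd A) v \<noteq> 1" "fst (snd A) v \<noteq> 2"
      using disjoint_first_two by simp_all
  qed
  ultimately show ?thesis by simp
qed (use disjoint_first_two in auto)

lemma disjoint_relspan: "(\<lambda>x. of_int sign_A * ind A x + of_int sign_B * ind B x) \<in> relspan P"
proof (rule pair_relspan_by[of id])
  show "bij_betw id (gV (fst A)) (gV (fst B))"
    using disjoint_vertices by simp
  show "\<forall>x \<in> gH (fst A). gvert (fst B) x = id (gvert (fst A) x)"
    "\<forall>v \<in> gV (fst A). mate_eq P (gstr (fst A) v) (gstr (fst B) (id v))"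
    using nonloop1 nonloop2 disjoint mate_eq_refl unfolding A_simps B_simps by auto
  have "card {a, c} \<le> card (gV (fst A))"
    using disjoint_vertices is_ographD(1)[of P "fst A" "fst (snd A)" "snd (snd A)"] is_ograph_A
    by (intro card_mono) auto
  moreover have "sign_B = sign_A"
    using sign_A_eq sign_B_eq contraction_sign_disjoint[OF disjoint_ord_bounds] nonloop1 nonloop2 disjoint
    by simp
  ultimately show "((\<forall>v \<in> gV (fst A). fst (snd B) (id v) = fst (snd A) v) \<and> sign_B = - sign_A)
      \<or> (2 \<le> card (gV (fst A)) \<and> (\<forall>v \<in> gV (fst A). fst (snd B) (id v) = transpose 1 2 (fst (snd A) v))
         \<and> sign_B = sign_A)"
    using disjoint_orders disjoint(1) by simp
qed

end

lemma pair_relspan: "(\<lambda>x. of_int sign_A * ind A x + of_int sign_B * ind B x) \<in> relspan P"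
proof (cases "c = b")
  case False
  show ?thesis
  proof (cases "d = a")
    case True
    then have "(\<lambda>x. of_int sign_B * ind B x + of_int sign_A * ind A x) \<in> relspan P"
      using edge_pair.path_relspan[OF edge_pair_swap] by simp
    then show ?thesis by (simp add: add.commute)
  next
    case False
    then show ?thesis
      using \<open>c \<noteq> b\<close> common_target_relspan common_source_relspan disjoint_relspan by metis
  qed
qed (rule path_relspan)

end

context reversible_operad
begin

lemma edge_pair_iff:
  "edge_pair P G ord src h1 h2 \<longleftrightarrow> is_ograph P (G, ord, src) \<and> h1 \<in> src \<and> h2 \<in> src \<and> h1 \<noteq> h2
    \<and> gvert G h1 \<noteq> gvert G (gopp G h1) \<and> gvert G h2 \<noteq> gvert G (gopp G h2)
    \<and> {gvert G h1, gvert G (gopp G h1)} \<noteq> {gvert G h2, gvert G (gopp G h2)}"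
  unfolding edge_pair_def edge_pair_axioms_def using reversible_operad_axioms by blast

lemma nonloop_after_contract_iff:
  assumes "h1 \<in> src" "gvert G h1 \<noteq> gvert G (gopp G h1)" "contract P (G, ord, src) h1 = (G1, ord1, src1)"
  shows "h2 \<in> src1 \<and> gvert G1 h2 \<noteq> gvert G1 (gopp G1 h2)
    \<longleftrightarrow> h2 \<in> src \<and> h1 \<noteq> h2 \<and> gvert G h2 \<noteq> gvert G (gopp G h2)
      \<and> {gvert G h1, gvert G (gopp G h1)} \<noteq> {gvert G h2, gvert G (gopp G h2)}"
  using merge_distinct_iff[OF assms(2)] contract_simps[of G ord src h1, unfolded assms(3) fst_conv snd_conv]
  by auto

definition signed_double_contraction ::
    "('v, 'l, 'o) ograph \<Rightarrow> 'l \<Rightarrow> 'l \<Rightarrow> ('v, 'l, 'o) ograph \<Rightarrow> rat" where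
  "signed_double_contraction g h1 h2 = (\<lambda>x. of_int (contract_sign g h1 * contract_sign (contract P g h1) h2)
     * ind (contract P (contract P g h1) h2) x)"

lemma dE_dE_ind:
  assumes og: "is_ograph P (G, ord, src)"
  shows "dE P (dE P (ind (G, ord, src)))
    = (\<lambda>x. \<Sum>(h1, h2) \<in> {(h1, h2). edge_pair P G ord src h1 h2}. signed_double_contraction (G, ord, src) h1 h2 x)"
proof -
  define E where "E = {h \<in> src. gvert G h \<noteq> gvert G (gopp G h)}"
  define E2 where "E2 = (\<lambda>h1. {h2 \<in> src. h1 \<noteq> h2 \<and> gvert G h2 \<noteq> gvert G (gopp G h2)
      \<and> {gvert G h1, gvert G (gopp G h1)} \<noteq> {gvert G h2, gvert G (gopp G h2)}})"
  have fin: "finite src" using is_ographD(2,4)[OF og] finite_subset by blast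
  have dE_gen_C1: "dE_gen P (contract P (G, ord, src) h1) = (\<lambda>x. \<Sum>h2\<in>E2 h1.
      of_int (contract_sign (contract P (G, ord, src) h1) h2) * ind (contract P (contract P (G, ord, src) h1) h2) x)"
    if "h1 \<in> E" for h1
  proof -
    obtain G1 o1 s1 where C1: "contract P (G, ord, src) h1 = (G1, o1, s1)" by (metis prod_cases3)
    have "{h2 \<in> s1. gvert G1 h2 \<noteq> gvert G1 (gopp G1 h2)} = E2 h1"
      using nonloop_after_contract_iff[of h1 src G ord G1 o1 s1] that C1 unfolding E_def E2_def by auto
    then show ?thesis unfolding C1 dE_gen_eq by simp
  qed
  have "dE P (dE P (ind (G, ord, src))) = (\<lambda>x. \<Sum>h1\<in>E. of_int (contract_sign (G, ord, src) h1)
      * dE_gen P (contract P (G, ord, src) h1) x)"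
    unfolding dE_ind dE_gen_eq E_def[symmetric] using fin unfolding E_def by (simp add: dE_sum_ind)
  also have "\<dots> = (\<lambda>x. \<Sum>h1\<in>E. \<Sum>h2\<in>E2 h1. signed_double_contraction (G, ord, src) h1 h2 x)"
    using dE_gen_C1 by (simp add: signed_double_contraction_def sum_distrib_left mult.assoc)
  also have "\<dots> = (\<lambda>x. \<Sum>(h1, h2) \<in> Sigma E E2. signed_double_contraction (G, ord, src) h1 h2 x)"
    using fin unfolding E_def E2_def by (simp add: sum.Sigma)
  also have "Sigma E E2 = {(h1, h2). edge_pair P G ord src h1 h2}"
    unfolding E_def E2_def edge_pair_iff using og by auto
  finally show ?thesis .
qed

lemma dE_dE_ind_relspan:
  assumes og: "is_ograph P (G, ord, src)"
  shows "dE P (dE P (ind (G, ord, src))) \<in> relspan P"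
  unfolding dE_dE_ind[OF og]
proof (rule relspan_sum_involution[where \<sigma> = prod.swap])
  have "{(h1, h2). edge_pair P G ord src h1 h2} \<subseteq> src \<times> src"
    unfolding edge_pair_iff by auto
  moreover have "finite (src \<times> src)"
    using is_ographD(2,4)[OF og] finite_subset by blast
  ultimately show "finite {(h1, h2). edge_pair P G ord src h1 h2}"
    by (rule finite_subset)
  show "prod.swap ` {(h1, h2). edge_pair P G ord src h1 h2} \<subseteq> {(h1, h2). edge_pair P G ord src h1 h2}"
    using edge_pair.edge_pair_swap by auto
  fix p assume "p \<in> {(h1, h2). edge_pair P G ord src h1 h2}"
  then obtain h1 h2 where "p = (h1, h2)" "edge_pair P G ord src h1 h2" by auto
  then show "prod.swap (prod.swap p) = p"
    and "(\<lambda>x. (case p of (h1, h2) \<Rightarrow> signed_double_contraction (G, ord, src) h1 h2 x)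
      + (case prod.swap p of (h1, h2) \<Rightarrow> signed_double_contraction (G, ord, src) h1 h2 x)) \<in> relspan P"
    using edge_pair.pair_relspan unfolding signed_double_contraction_def by auto
qed

end

theorem lemma8p1:
  fixes P :: "('l, 'o) opd" and g :: "('v, 'l, 'o) ograph"
  assumes "infinite (UNIV :: 'l set)"
    and "operad_on_sets P"
    and "reversible P"
    and "is_ograph P g"
  shows "dE P (dE P (ind g)) \<in> relspan P"
proof -
  interpret reversible_operad P
    using assms(1-3) by unfold_locales
  obtain G ord src where "g = (G, ord, src)"
    by (cases g)
  then show ?thesis
    using dE_dE_ind_relspan assms(4) by simp
qed

end
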